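(* For every $\boldsymbol\theta\in\boldsymbol\Theta$ and every $\alpha,\beta\in(0,1)$ with $\alpha+\beta<1/2$, $$\mathcal L_{\boldsymbol\theta}(\alpha,\beta)\;\ge\;\max\left\{\frac{\varphi(\alpha+\beta,\beta)}{I^0(\boldsymbol\theta)},\;\frac{\varphi(\alpha+\beta,\alpha)}{I^1(\boldsymbol\theta)}\right\},$$ where a term with denominator $+\infty$ is interpreted as $0$. Consequently, as $\alpha,\beta\to0$, $$\mathcal L_{\boldsymbol\theta}(\alpha,\beta)\;\ge\;(1+o(1))\max\left\{\frac{|\log\beta|}{I^0(\boldsymbol\theta)},\;\frac{|\log\alpha|}{I^1(\boldsymbol\theta)}\right\}.$$
   Context: Setting: $K\ge1$ mutually independent data streams $\{X_k(n),n\ge1\}$, $k\in[K]=\{1,\dots,K\}$. Within each stream the observations are i.i.d. with density $f_{\theta_k}$ with respect to a $\sigma$-finite measure $\nu$, where $\{f_\theta:\theta\in\Theta\}$ is a parametric family. $\Theta=\Theta^0\cup\Theta^1$ with $\Theta^0,\Theta^1$ nonempty and disjoint; stream $k$ is a noise if $\theta_k\in\Theta^0$ and a signal if $\theta_k\in\Theta^1$. For $\theta,\theta'\in\Theta$, $I(\theta,\theta')=\int f_\theta\log(f_\theta/f_{\theta'})\,d\nu$ is the Kullback–Leibler number. Standing separation assumption: $I(\theta^0,\Theta^1):=\inf_{\theta\in\Theta^1}I(\theta^0,\theta)>0$ for all $\theta^0\in\Theta^0$ and $I(\theta^1,\Theta^0):=\inf_{\theta\in\Theta^0}I(\theta^1,\theta)>0$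 for all $\theta^1\in\Theta^1$. The constrained joint parameter space is $\boldsymbol\Theta=\{\boldsymbol\theta=(\theta_1,\dots,\theta_K)\in\Theta^K:\exists\,\theta^0\in\Theta^0,\theta^1\in\Theta^1$ such that for all $k$, $\theta_k\in\Theta^0\Rightarrow\theta_k=\theta^0$ and $\theta_k\in\Theta^1\Rightarrow\theta_k=\theta^1\}$ (all noises share one parameter and all signals share one parameter). $\mathrm P_{\boldsymbol\theta},\mathrm E_{\boldsymbol\theta}$ denote probability/expectation when stream $k$ has density $f_{\theta_k}$. For $\boldsymbol\theta,\boldsymbol\theta'\in\boldsymbol\Theta$, $I(\boldsymbol\theta,\boldsymbol\theta')=\sum_{k}I(\theta_k,\theta'_k)$. $A(\boldsymbol\theta)=\{k\in[K]:\theta_k\in\Theta^1\}$ is the set of signals. Let $\mathcal F(n)=\sigma(X_k(t):1\le t\le n,k\in[K])$. A test is a pair $(T,D)$ with $T$ an $\{\mathcal F(n)\}$-stopping time and $D\subseteq[K]$ $\mathcal F(T)$-measurable. $\Delta(\alpha,\beta)$ is the set of tests such that for every $\boldsymbol\theta\in\boldsymbol\Theta$: $\mathrm P_{\boldsymbol\theta}(T<\infty)=1$, $\mathrm P_{\boldsymbol\theta}(D\setminus A(\boldsymbol\theta)\ne\emptyset)\le\alpha$ and $\mathrm P_{\boldsymbol\theta}(A(\boldsymbol\theta)\setminus D\ne\emptyset)\le\beta$. $\mathcal L_{\boldsymbol\theta}(\alpha,\beta)=\inf\{\mathrm E_{\boldsymbol\theta}[T]:(T,D)\in\Delta(\alpha,\beta)\}$.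 $I^0(\boldsymbol\theta)=\inf\{I(\boldsymbol\theta,\boldsymbol\theta'):\boldsymbol\theta'\in\boldsymbol\Theta,\ A(\boldsymbol\theta')\setminus A(\boldsymbol\theta)\neq\emptyset\}$, $I^1(\boldsymbol\theta)=\inf\{I(\boldsymbol\theta,\boldsymbol\theta'):\boldsymbol\theta'\in\boldsymbol\Theta,\ A(\boldsymbol\theta)\setminus A(\boldsymbol\theta')\neq\emptyset\}$, with $\inf\emptyset=+\infty$. $\varphi(x,y)=x\log\frac{x}{1-y}+(1-x)\log\frac{1-x}{y}$ for $x,y\in(0,1)$, $x+y<1$. *)

theory Defs
  imports "HOL-Probability.Probability"
begin

text \<open>Integrand of f log(f/g), split into positive and negative parts, with the usual
  conventions 0 log(0/g) = 0 and f log(f/0) = +infinity for f > 0.\<close>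

definition kl_pos :: "('a \<Rightarrow> real) \<Rightarrow> ('a \<Rightarrow> real) \<Rightarrow> 'a \<Rightarrow> ennreal" where
  "kl_pos f g x = (if f x = 0 then 0 else if g x = 0 then \<infinity>
                   else ennreal (f x * ln (f x / g x)))"

definition kl_neg :: "('a \<Rightarrow> real) \<Rightarrow> ('a \<Rightarrow> real) \<Rightarrow> 'a \<Rightarrow> ennreal" where
  "kl_neg f g x = (if f x = 0 \<or> g x = 0 then 0
                   else ennreal (- (f x * ln (f x / g x))))"

definition KL :: "'a measure \<Rightarrow> ('a \<Rightarrow> real) \<Rightarrow> ('a \<Rightarrow> real) \<Rightarrow> ereal" where
  "KL \<nu> f g = enn2ereal (\<integral>\<^sup>+ x. kl_pos f g x \<partial>\<nu>) - enn2ereal (\<integral>\<^sup>+ x. kl_neg f g x \<partial>\<nu>)"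

definition KL_set :: "'a measure \<Rightarrow> ('p \<Rightarrow> 'a \<Rightarrow> real) \<Rightarrow> 'p \<Rightarrow> 'p set \<Rightarrow> ereal" where
  "KL_set \<nu> f t S = (INF s\<in>S. KL \<nu> (f t) (f s))"

text \<open>Streams are indexed by [K] = {1..K}; a joint parameter is theta :: nat => 'p,
  of which only the values on {1..K} matter.\<close>

definition joint_params :: "nat \<Rightarrow> 'p set \<Rightarrow> 'p set \<Rightarrow> (nat \<Rightarrow> 'p) set" where
  "joint_params K \<Theta>0 \<Theta>1 =
     {\<theta>. (\<forall>k\<in>{1..K}. \<theta> k \<in> \<Theta>0 \<union> \<Theta>1) \<and>
          (\<exists>t0\<in>\<Theta>0. \<exists>t1\<in>\<Theta>1. \<forall>k\<in>{1..K}. (\<theta> k \<in> \<Theta>0 \<longrightarrow> \<theta> k = t0) \<and> (\<theta> k \<in> \<Theta>1 \<longrightarrow> \<theta> k = t1))}"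

definition signals :: "nat \<Rightarrow> 'p set \<Rightarrow> (nat \<Rightarrow> 'p) \<Rightarrow> nat set" where
  "signals K \<Theta>1 \<theta> = {k\<in>{1..K}. \<theta> k \<in> \<Theta>1}"

definition KL_joint :: "'a measure \<Rightarrow> ('p \<Rightarrow> 'a \<Rightarrow> real) \<Rightarrow> nat \<Rightarrow> (nat \<Rightarrow> 'p) \<Rightarrow> (nat \<Rightarrow> 'p) \<Rightarrow> ereal" where
  "KL_joint \<nu> f K \<theta> \<theta>' = (\<Sum>k\<in>{1..K}. KL \<nu> (f (\<theta> k)) (f (\<theta>' k)))"

definition I0 :: "'a measure \<Rightarrow> ('p \<Rightarrow> 'a \<Rightarrow> real) \<Rightarrow> nat \<Rightarrow> 'p set \<Rightarrow> 'p set \<Rightarrow> (nat \<Rightarrow> 'p) \<Rightarrow> ereal" where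
  "I0 \<nu> f K \<Theta>0 \<Theta>1 \<theta> = Inf {KL_joint \<nu> f K \<theta> \<theta>' | \<theta>'.
       \<theta>' \<in> joint_params K \<Theta>0 \<Theta>1 \<and> signals K \<Theta>1 \<theta>' - signals K \<Theta>1 \<theta> \<noteq> {}}"

definition I1 :: "'a measure \<Rightarrow> ('p \<Rightarrow> 'a \<Rightarrow> real) \<Rightarrow> nat \<Rightarrow> 'p set \<Rightarrow> 'p set \<Rightarrow> (nat \<Rightarrow> 'p) \<Rightarrow> ereal" where
  "I1 \<nu> f K \<Theta>0 \<Theta>1 \<theta> = Inf {KL_joint \<nu> f K \<theta> \<theta>' | \<theta>'.
       \<theta>' \<in> joint_params K \<Theta>0 \<Theta>1 \<and> signals K \<Theta>1 \<theta> - signals K \<Theta>1 \<theta>' \<noteq> {}}"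

text \<open>Observations X_k(n), k in [K], n >= 1, are the coordinates (k,n) of omega.
  obs_idx K N = [K] x {1..N}; all_idx K = [K] x {1,2,...}.\<close>
definition obs_idx :: "nat \<Rightarrow> nat \<Rightarrow> (nat \<times> nat) set" where
  "obs_idx K N = {1..K} \<times> {1..N}"

definition all_idx :: "nat \<Rightarrow> (nat \<times> nat) set" where
  "all_idx K = {1..K} \<times> {1..}"

definition Pth :: "'a measure \<Rightarrow> ('p \<Rightarrow> 'a \<Rightarrow> real) \<Rightarrow> nat \<Rightarrow> (nat \<Rightarrow> 'p) \<Rightarrow> ((nat \<times> nat) \<Rightarrow> 'a) measure" where
  "Pth \<nu> f K \<theta> = (\<Pi>\<^sub>M i\<in>all_idx K. density \<nu> (\<lambda>x. ennreal (f (\<theta> (fst i)) x)))"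

text \<open>The underlying measurable space (same space and sets as every P_theta).\<close>
definition Omega :: "'a measure \<Rightarrow> nat \<Rightarrow> ((nat \<times> nat) \<Rightarrow> 'a) measure" where
  "Omega \<nu> K = (\<Pi>\<^sub>M i\<in>all_idx K. \<nu>)"

text \<open>The filtration F(n) = sigma(X_k(t) : 1 <= t <= n, k in [K]), indexed by enat,
  with F(infinity) the full sigma-algebra.\<close>
definition filt :: "'a measure \<Rightarrow> nat \<Rightarrow> enat \<Rightarrow> ((nat \<times> nat) \<Rightarrow> 'a) measure" where
  "filt \<nu> K t = (case t of
      enat n \<Rightarrow> vimage_algebra (space (Omega \<nu> K)) (\<lambda>\<omega>. restrict \<omega> (obs_idx K n))
                   (\<Pi>\<^sub>M i\<in>obs_idx K n. \<nu>)
    | \<infinity> \<Rightarrow> Omega \<nu> K)"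

text \<open>A test (T, D): T an {F(n)}-stopping time (possibly infinite), D a subset of [K]
  that is F(T)-measurable.\<close>
definition is_test :: "'a measure \<Rightarrow> nat \<Rightarrow> (((nat \<times> nat) \<Rightarrow> 'a) \<Rightarrow> enat) \<Rightarrow> (((nat \<times> nat) \<Rightarrow> 'a) \<Rightarrow> nat set) \<Rightarrow> bool" where
  "is_test \<nu> K T D \<longleftrightarrow>
     stopping_time (filt \<nu> K) T \<and>
     (\<forall>\<omega>\<in>space (Omega \<nu> K). D \<omega> \<subseteq> {1..K}) \<and>
     (\<forall>S t. {\<omega>\<in>space (Omega \<nu> K). D \<omega> = S \<and> T \<omega> \<le> t} \<in> sets (filt \<nu> K t))"

definition Delta :: "'a measure \<Rightarrow> ('p \<Rightarrow> 'a \<Rightarrow> real) \<Rightarrow> nat \<Rightarrow> 'p set \<Rightarrow> 'p set \<Rightarrow> real \<Rightarrow> real \<Rightarrow>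
     ((((nat \<times> nat) \<Rightarrow> 'a) \<Rightarrow> enat) \<times> (((nat \<times> nat) \<Rightarrow> 'a) \<Rightarrow> nat set)) set" where
  "Delta \<nu> f K \<Theta>0 \<Theta>1 \<alpha> \<beta> = {(T, D). is_test \<nu> K T D \<and>
     (\<forall>\<theta>\<in>joint_params K \<Theta>0 \<Theta>1.
        prob_space.prob (Pth \<nu> f K \<theta>) {\<omega>\<in>space (Pth \<nu> f K \<theta>). T \<omega> < \<infinity>} = 1 \<and>
        prob_space.prob (Pth \<nu> f K \<theta>) {\<omega>\<in>space (Pth \<nu> f K \<theta>). D \<omega> - signals K \<Theta>1 \<theta> \<noteq> {}} \<le> \<alpha> \<and>
        prob_space.prob (Pth \<nu> f K \<theta>) {\<omega>\<in>space (Pth \<nu> f K \<theta>). signals K \<Theta>1 \<theta> - D \<omega> \<noteq> {}} \<le> \<beta>)}"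

definition Lopt :: "'a measure \<Rightarrow> ('p \<Rightarrow> 'a \<Rightarrow> real) \<Rightarrow> nat \<Rightarrow> 'p set \<Rightarrow> 'p set \<Rightarrow> (nat \<Rightarrow> 'p) \<Rightarrow> real \<Rightarrow> real \<Rightarrow> ennreal" where
  "Lopt \<nu> f K \<Theta>0 \<Theta>1 \<theta> \<alpha> \<beta> =
     (INF TD\<in>Delta \<nu> f K \<Theta>0 \<Theta>1 \<alpha> \<beta>. \<integral>\<^sup>+ \<omega>. ennreal_of_enat (fst TD \<omega>) \<partial>(Pth \<nu> f K \<theta>))"

definition phi :: "real \<Rightarrow> real \<Rightarrow> real" where
  "phi x y = x * ln (x / (1 - y)) + (1 - x) * ln ((1 - x) / y)"

definition div_inf :: "real \<Rightarrow> ereal \<Rightarrow> real" where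
  "div_inf c I = (if I = \<infinity> then 0 else c / real_of_ereal I)"

end

theory Submission
  imports Defs
begin

(* Fix a test (T, D) and two parameters \<theta>, \<theta>' that disagree on whether some stream k is a
   signal; let E be the event that D decides about k as is correct under \<theta>'. Then P_\<theta>(E) and
   P_\<theta>'(E^c) are bounded by the two error probabilities. With L the likelihood ratio
   dP_\<theta>'/dP_\<theta> on F(T), the inequality ln w \<le> w - 1 applied to w = L / c and the change of
   measure E_\<theta>[1_A L] \<le> P_\<theta>'(A) give, for every A \<in> F(T) and c > 0,
     E_\<theta>[1_A ln L] + P_\<theta>(A) \<le> P_\<theta>'(A) / c + P_\<theta>(A) ln c.
   Adding this for A = E and A = E^c with suitable constants and using Wald's identity
   E_\<theta>[-ln L] = E_\<theta>[T] I(\<theta>, \<theta>') yields phi(\<alpha> + \<beta>, \<beta>) \<le> E_\<theta>[T] I(\<theta>, \<theta>'), where phi(x, y) is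
   the Kullback-Leibler divergence of Bernoulli(x) from Bernoulli(1 - y). Taking the infimum
   over \<theta>' gives the bound with I^0; the event {k \<notin> D}, for which the two error probabilities
   change places, gives the one with I^1.
   The asymptotic form follows from phi(x, y) \<ge> (1 - x) |ln y| - 1. *)

section \<open>The function phi\<close>

lemma ln_less_minus_one:
  fixes w :: real
  assumes "0 < w" "w \<noteq> 1"
  shows "ln w < w - 1"
  using ln_le_minus_one[OF assms(1)] ln_eq_minus_one[OF assms(1)] assms(2) by fastforce

lemma phi_pos:
  fixes x y :: real
  assumes "0 < x" "0 < y" "x + y < 1"
  shows "0 < phi x y"
proof -
  have "(1 - y) / x \<noteq> 1"
    using assms by (auto simp: field_simps)
  then have "x * ln ((1 - y) / x) < x * ((1 - y) / x - 1)"
    using assms by (intro mult_strict_left_mono ln_less_minus_one) auto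
  moreover have "(1 - x) * ln (y / (1 - x)) \<le> (1 - x) * (y / (1 - x) - 1)"
    using assms by (intro mult_left_mono ln_le_minus_one) auto
  moreover have "x * ((1 - y) / x - 1) + (1 - x) * (y / (1 - x) - 1) = 0"
    using assms by (simp add: field_simps)
  moreover have "phi x y = - (x * ln ((1 - y) / x) + (1 - x) * ln (y / (1 - x)))"
    using assms by (simp add: phi_def ln_div algebra_simps)
  ultimately show ?thesis by linarith
qed

lemma diff_one_le_mult_ln:
  fixes x :: real
  assumes "0 < x"
  shows "x - 1 \<le> x * ln x"
proof -
  have "x * ln (1 / x) \<le> x * (1 / x - 1)"
    using assms by (intro mult_left_mono ln_le_minus_one) auto
  then show ?thesis
    using assms by (simp add: ln_div algebra_simps)
qed

lemma phi_ge_minus_ln: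
  fixes x y :: real
  assumes "0 < x" "x < 1" "0 < y" "y < 1"
  shows "(1 - x) * - ln y - 1 \<le> phi x y"
proof -
  have "phi x y = x * ln x + (1 - x) * ln (1 - x) - x * ln (1 - y) + (1 - x) * - ln y"
    using assms by (simp add: phi_def ln_div algebra_simps)
  moreover have "x - 1 \<le> x * ln x" "- x \<le> (1 - x) * ln (1 - x)"
    using assms diff_one_le_mult_ln[of x] diff_one_le_mult_ln[of "1 - x"] by auto
  moreover have "x * ln (1 - y) \<le> 0"
    using assms by (intro mult_nonneg_nonpos) auto
  ultimately show ?thesis by linarith
qed

lemma phi_asymptotic:
  fixes \<epsilon> :: real
  assumes "0 < \<epsilon>"
  obtains \<delta> where "0 < \<delta>" "\<delta> \<le> 1/4"
    "\<And>x y. 0 < x \<Longrightarrow> x < 2 * \<delta> \<Longrightarrow> 0 < y \<Longrightarrow> y < \<delta> \<Longrightarrow> (1 - \<epsilon>) * \<bar>ln y\<bar> \<le> phi x y"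
proof
  define \<delta> where "\<delta> = min (min (\<epsilon> / 4) (exp (- 2 / \<epsilon>))) (1/4)"
  show "0 < \<delta>" "\<delta> \<le> 1/4"
    using assms by (auto simp: \<delta>_def)
  fix x y :: real
  assume x: "0 < x" "x < 2 * \<delta>" and y: "0 < y" "y < \<delta>"
  have "ln y < ln (exp (- 2 / \<epsilon>))"
    using y by (subst ln_less_cancel_iff) (auto simp: \<delta>_def)
  then have big: "2 / \<epsilon> < - ln y" by simp
  have "0 < - ln y"
    using y by (simp add: \<delta>_def)
  have "1 \<le> (\<epsilon> / 2) * - ln y"
    using mult_strict_left_mono[OF big, of "\<epsilon> / 2"] assms by simp
  also have "\<dots> \<le> (\<epsilon> - x) * - ln y"
    using x \<open>0 < - ln y\<close> by (intro mult_right_mono) (auto simp: \<delta>_def)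
  finally have "(1 - \<epsilon>) * - ln y \<le> (1 - x) * - ln y - 1"
    by (simp add: algebra_simps)
  also have "\<dots> \<le> phi x y"
    using x y by (intro phi_ge_minus_ln) (auto simp: \<delta>_def)
  finally show "(1 - \<epsilon>) * \<bar>ln y\<bar> \<le> phi x y"
    using y by (simp add: \<delta>_def)
qed

text \<open>c1 and c2 are the optimal constants Q(A) / P(A) in the event bound for A = E and A = E^c
  when P(E) = a + b and Q(E^c) = b; the right-hand side decreases in e = P(E) and f = Q(E^c).\<close>

lemma phi_le_error_bound:
  fixes a b e f :: real
  assumes a: "0 < a" and b: "0 < b" and ab: "a + b < 1/2"
    and e: "0 \<le> e" "e \<le> a" and f: "0 \<le> f" "f \<le> b"
  defines "c1 \<equiv> (1 - b) / (a + b)" and "c2 \<equiv> b / (1 - (a + b))"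
  shows "phi (a + b) b \<le> 1 - (1 - f) / c1 - f / c2 - e * ln c1 - (1 - e) * ln c2"
proof -
  define x where "x = a + b"
  have x: "0 < x" "x < 1/2" "x + b < 1"
    using a b ab by (auto simp: x_def)
  have c1_gt: "1 < c1" and c2_lt: "c2 < 1" "0 < c2"
    using x b by (auto simp: c1_def c2_def x_def[symmetric] field_simps)
  have "ln c2 < ln c1"
    using c1_gt c2_lt by (smt (verit) ln_gt_zero ln_less_zero)
  then have "0 \<le> (x - e) * (ln c1 - ln c2)"
    using e x_def b by simp
  moreover have "1 / c1 < 1" "1 < 1 / c2"
    using c1_gt c2_lt by simp_all
  then have "0 \<le> (b - f) * (1 / c2 - 1 / c1)"
    using f by simp
  moreover have "phi x b = - x * ln c1 - (1 - x) * ln c2"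
    using x b by (simp add: phi_def c1_def c2_def x_def[symmetric] ln_div algebra_simps)
  moreover have "1 - (1 - b) / c1 - b / c2 = 0"
    using x b by (simp add: c1_def c2_def x_def[symmetric] field_simps)
  ultimately show ?thesis
    unfolding x_def[symmetric] by (simp add: algebra_simps) (simp add: diff_divide_distrib)
qed

lemma mult_div_inf: "\<gamma> * div_inf c I = div_inf (\<gamma> * c) I"
  by (simp add: div_inf_def)

lemma div_inf_Inf_le:
  fixes S :: "ereal set" and c ph t :: real
  assumes S: "\<And>s. s \<in> S \<Longrightarrow> s = \<infinity> \<or> (\<exists>r. s = ereal r \<and> ph \<le> t * r)"
    and ph: "0 < ph" "c \<le> ph" and t: "0 \<le> t"
  shows "div_inf c (Inf S) \<le> t"
proof (cases "Inf S = \<infinity>")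
  case False
  then obtain s0 r0 where s0: "s0 \<in> S" "s0 = ereal r0" "ph \<le> t * r0"
    using S by (metis Inf_eq_PInfty insertCI subsetI subset_singletonD)
  have t_pos: "0 < t"
    using s0(3) ph t by (cases "t = 0") auto
  have "ereal (ph / t) \<le> Inf S"
  proof (rule Inf_greatest)
    fix s assume "s \<in> S"
    then show "ereal (ph / t) \<le> s"
      using S t_pos by (force simp: pos_divide_le_eq mult.commute)
  qed
  moreover have "Inf S \<le> ereal r0"
    using Inf_lower[OF s0(1)] s0(2) by simp
  ultimately obtain r where r: "Inf S = ereal r" "ph / t \<le> r"
    by (cases "Inf S") auto
  then have "ph \<le> t * r" "0 < r"
    using t_pos ph by (auto simp: pos_divide_le_eq mult.commute intro: less_le_trans[OF divide_pos_pos])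
  then show ?thesis
    using r ph by (simp add: div_inf_def pos_divide_le_eq mult.commute order_trans[of c ph])
qed (simp add: div_inf_def t)

section \<open>The observation filtration\<close>

lemma obs_idx_subset: "obs_idx K n \<subseteq> all_idx K"
  by (auto simp: obs_idx_def all_idx_def)

lemma finite_obs_idx [simp]: "finite (obs_idx K n)"
  by (simp add: obs_idx_def)

lemma fst_obs_idx: "i \<in> obs_idx K n \<Longrightarrow> fst i \<in> {1..K}"
  by (auto simp: obs_idx_def)

lemma space_filt [simp]: "space (filt \<nu> K t) = space (Omega \<nu> K)"
  by (cases t) (simp_all add: filt_def)

lemma restrict_obs_in_space:
  "\<omega> \<in> space (Omega \<nu> K) \<Longrightarrow> restrict \<omega> (obs_idx K n) \<in> space (\<Pi>\<^sub>M i\<in>obs_idx K n. \<nu>)"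
  using obs_idx_subset[of K n] by (auto simp: Omega_def space_PiM PiE_iff)

lemma sets_filt_enat:
  "sets (filt \<nu> K (enat n)) =
     {(\<lambda>\<omega>. restrict \<omega> (obs_idx K n)) -` B \<inter> space (Omega \<nu> K) | B. B \<in> sets (\<Pi>\<^sub>M i\<in>obs_idx K n. \<nu>)}"
  unfolding filt_def by (simp add: sets_vimage_algebra2 restrict_obs_in_space)

lemma sets_filt_subset: "sets (filt \<nu> K t) \<subseteq> sets (Omega \<nu> K)"
proof (cases t)
  case (enat n)
  have "(\<lambda>\<omega>. restrict \<omega> (obs_idx K n)) \<in> measurable (Omega \<nu> K) (\<Pi>\<^sub>M i\<in>obs_idx K n. \<nu>)"
    unfolding Omega_def by (rule measurable_restrict_subset[OF obs_idx_subset])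
  then show ?thesis
    using enat by (auto simp: sets_filt_enat)
qed (simp add: filt_def)

lemma sets_filt_mono:
  assumes "m \<le> n"
  shows "sets (filt \<nu> K (enat m)) \<subseteq> sets (filt \<nu> K (enat n))"
proof
  fix X assume "X \<in> sets (filt \<nu> K (enat m))"
  then obtain B where B: "B \<in> sets (\<Pi>\<^sub>M i\<in>obs_idx K m. \<nu>)"
    and X: "X = (\<lambda>\<omega>. restrict \<omega> (obs_idx K m)) -` B \<inter> space (Omega \<nu> K)"
    by (auto simp: sets_filt_enat)
  have sub: "obs_idx K m \<subseteq> obs_idx K n"
    using assms by (auto simp: obs_idx_def)
  define B' where "B' = (\<lambda>x. restrict x (obs_idx K m)) -` B \<inter> space (\<Pi>\<^sub>M i\<in>obs_idx K n. \<nu>)"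
  have "B' \<in> sets (\<Pi>\<^sub>M i\<in>obs_idx K n. \<nu>)"
    unfolding B'_def using measurable_restrict_subset[OF sub] B by (rule measurable_sets)
  moreover have "X = (\<lambda>\<omega>. restrict \<omega> (obs_idx K n)) -` B' \<inter> space (Omega \<nu> K)"
    using sub restrict_obs_in_space[of _ \<nu> K n] unfolding X B'_def
    by (auto simp: restrict_restrict Int_absorb1)
  ultimately show "X \<in> sets (filt \<nu> K (enat n))"
    by (auto simp: sets_filt_enat)
qed

lemma is_test_le_sets:
  "is_test \<nu> K T D \<Longrightarrow> {\<omega>\<in>space (Omega \<nu> K). T \<omega> \<le> t} \<in> sets (filt \<nu> K t)"
  unfolding is_test_def stopping_time_def pred_def by auto

lemma is_test_decision_subset:
  "is_test \<nu> K T D \<Longrightarrow> \<omega> \<in> space (Omega \<nu> K) \<Longrightarrow> D \<omega> \<subseteq> {1..K}"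
  unfolding is_test_def by auto

lemma is_test_decision_eq_sets:
  assumes test: "is_test \<nu> K T D"
  shows "{\<omega>\<in>space (Omega \<nu> K). Pr (D \<omega>) \<and> T \<omega> = enat n} \<in> sets (filt \<nu> K (enat n))"
proof -
  have DS: "\<And>S m. {\<omega>\<in>space (Omega \<nu> K). D \<omega> = S \<and> T \<omega> \<le> enat m} \<in> sets (filt \<nu> K (enat m))"
    using test unfolding is_test_def by auto
  define Z where "Z S = {\<omega>\<in>space (Omega \<nu> K). D \<omega> = S \<and> T \<omega> \<le> enat n} -
      (if n = 0 then {} else {\<omega>\<in>space (Omega \<nu> K). D \<omega> = S \<and> T \<omega> \<le> enat (n - 1)})" for S
  have Z: "Z S \<in> sets (filt \<nu> K (enat n))" for S
  proof (cases "n = 0")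
    case False
    then have "{\<omega>\<in>space (Omega \<nu> K). D \<omega> = S \<and> T \<omega> \<le> enat (n - 1)} \<in> sets (filt \<nu> K (enat n))"
      using DS sets_filt_mono[of "n - 1" n \<nu> K] by auto
    then show ?thesis
      using DS False unfolding Z_def by auto
  qed (use DS in \<open>simp add: Z_def\<close>)
  have "{\<omega>\<in>space (Omega \<nu> K). Pr (D \<omega>) \<and> T \<omega> = enat n} = (\<Union>S\<in>{S. S \<subseteq> {1..K} \<and> Pr S}. Z S)"
  proof -
    have e: "(T \<omega> = enat n) \<longleftrightarrow> (T \<omega> \<le> enat n \<and> \<not> (n \<noteq> 0 \<and> T \<omega> \<le> enat (n - 1)))" for \<omega>
      by (cases "T \<omega>") auto
    show ?thesis
      using is_test_decision_subset[OF test] unfolding Z_def e by auto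
  qed
  also have "\<dots> \<in> sets (filt \<nu> K (enat n))"
    using Z by (intro sets.finite_UN) auto
  finally show ?thesis .
qed

lemma is_test_decision_sets:
  assumes test: "is_test \<nu> K T D"
  shows "{\<omega>\<in>space (Omega \<nu> K). Pr (D \<omega>)} \<in> sets (Omega \<nu> K)"
proof -
  have DS: "\<And>S. {\<omega>\<in>space (Omega \<nu> K). D \<omega> = S \<and> T \<omega> \<le> \<infinity>} \<in> sets (filt \<nu> K \<infinity>)"
    using test unfolding is_test_def by blast
  have "{\<omega>\<in>space (Omega \<nu> K). Pr (D \<omega>)} =
      (\<Union>S\<in>{S. S \<subseteq> {1..K} \<and> Pr S}. {\<omega>\<in>space (Omega \<nu> K). D \<omega> = S \<and> T \<omega> \<le> \<infinity>})"
    using is_test_decision_subset[OF test] by auto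
  also have "\<dots> \<in> sets (Omega \<nu> K)"
    using DS by (intro sets.finite_UN) (auto simp: filt_def)
  finally show ?thesis .
qed

section \<open>Independent i.i.d. streams\<close>

locale iid_streams =
  fixes \<nu> :: "'a measure" and K :: nat and g :: "nat \<Rightarrow> 'a \<Rightarrow> real"
  assumes sigma_finite: "sigma_finite_measure \<nu>"
    and K_pos: "1 \<le> K"
    and g_measurable: "\<And>k. k \<in> {1..K} \<Longrightarrow> g k \<in> borel_measurable \<nu>"
    and g_nonneg: "\<And>k x. k \<in> {1..K} \<Longrightarrow> x \<in> space \<nu> \<Longrightarrow> 0 \<le> g k x"
    and g_density: "\<And>k. k \<in> {1..K} \<Longrightarrow> (\<integral>\<^sup>+ x. ennreal (g k x) \<partial>\<nu>) = 1"
begin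

text \<open>Outside of [K] the density is replaced by that of stream 1, so that every coordinate law is
  a probability measure, as product_prob_space requires for all indices.\<close>

definition dens :: "nat \<Rightarrow> 'a \<Rightarrow> real" where
  "dens k = (if k \<in> {1..K} then g k else g 1)"

definition obs_law :: "nat \<times> nat \<Rightarrow> 'a measure" where
  "obs_law i = density \<nu> (\<lambda>x. ennreal (dens (fst i) x))"

lemma measurable_dens [measurable]: "dens k \<in> borel_measurable \<nu>"
  and dens_nonneg: "x \<in> space \<nu> \<Longrightarrow> 0 \<le> dens k x"
  and nn_integral_dens: "(\<integral>\<^sup>+ x. ennreal (dens k x) \<partial>\<nu>) = 1"
  using g_measurable g_nonneg g_density K_pos by (auto simp: dens_def)

lemma sets_obs_law [simp, measurable_cong]: "sets (obs_law i) = sets \<nu>"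
  by (simp add: obs_law_def)

lemma space_obs_law [simp]: "space (obs_law i) = space \<nu>"
  by (simp add: obs_law_def)

lemma prob_space_obs_law: "prob_space (obs_law i)"
proof (rule prob_spaceI)
  have "emeasure (obs_law i) (space (obs_law i)) =
      (\<integral>\<^sup>+ x. ennreal (dens (fst i) x) * indicator (space \<nu>) x \<partial>\<nu>)"
    unfolding obs_law_def space_density by (rule emeasure_density) measurable
  also have "\<dots> = 1"
    by (subst nn_integral_cong[where v="\<lambda>x. ennreal (dens (fst i) x)"]) (auto simp: nn_integral_dens)
  finally show "emeasure (obs_law i) (space (obs_law i)) = 1" .
qed

sublocale streams: product_prob_space obs_law "all_idx K"
proof -
  have "product_sigma_finite obs_law"
    unfolding product_sigma_finite_def using prob_space_obs_law prob_space_imp_sigma_finite by blast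
  then show "product_prob_space obs_law"
    by (simp add: product_prob_space_def product_prob_space_axioms_def prob_space_obs_law)
qed

lemma PiM_density_eq_PiM_obs_law:
  "(\<Pi>\<^sub>M i\<in>all_idx K. density \<nu> (\<lambda>x. ennreal (g (fst i) x))) = PiM (all_idx K) obs_law"
  by (rule PiM_cong) (auto simp: obs_law_def dens_def all_idx_def)

lemma space_Omega: "space (Omega \<nu> K) = space (PiM (all_idx K) obs_law)"
  by (simp add: Omega_def space_PiM)

lemma nn_integral_restrict_PiM:
  assumes "finite J" "J \<subseteq> all_idx K" and h: "h \<in> borel_measurable (PiM J obs_law)"
  shows "(\<integral>\<^sup>+ \<omega>. h (restrict \<omega> J) \<partial>PiM (all_idx K) obs_law) = (\<integral>\<^sup>+ x. h x \<partial>PiM J obs_law)"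
proof -
  have "(\<integral>\<^sup>+ x. h x \<partial>PiM J obs_law) =
      (\<integral>\<^sup>+ x. h x \<partial>distr (PiM (all_idx K) obs_law) (PiM J obs_law) (\<lambda>x. restrict x J))"
    using streams.distr_PiM_restrict_finite[OF assms(1,2)] by simp
  also have "\<dots> = (\<integral>\<^sup>+ \<omega>. h (restrict \<omega> J) \<partial>PiM (all_idx K) obs_law)"
    by (rule nn_integral_distr) (auto intro: measurable_restrict_subset[OF assms(2)] h)
  finally show ?thesis by simp
qed

lemma PiM_obs_law_density:
  assumes J: "finite J"
  shows "PiM J obs_law = density (PiM J (\<lambda>_. \<nu>)) (\<lambda>x. \<Prod>i\<in>J. ennreal (dens (fst i) (x i)))"
proof -
  interpret nu: product_sigma_finite "\<lambda>_. \<nu>"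
    unfolding product_sigma_finite_def using sigma_finite by blast
  have meas: "(\<lambda>x. \<Prod>i\<in>J. ennreal (dens (fst i) (x i))) \<in> borel_measurable (PiM J (\<lambda>_. \<nu>))"
    using measurable_dens by measurable
  show ?thesis
  proof (rule streams.PiM_eqI[symmetric, OF J])
    show "sets (density (PiM J (\<lambda>_. \<nu>)) (\<lambda>x. \<Prod>i\<in>J. ennreal (dens (fst i) (x i)))) = sets (PiM J obs_law)"
      by (simp cong: sets_PiM_cong)
  next
    fix A assume A: "\<And>i. i \<in> J \<Longrightarrow> A i \<in> sets (obs_law i)"
    have "Pi\<^sub>E J A \<in> sets (PiM J (\<lambda>_. \<nu>))"
      using A by (intro sets_PiM_I_finite J) auto
    then have "emeasure (density (PiM J (\<lambda>_. \<nu>)) (\<lambda>x. \<Prod>i\<in>J. ennreal (dens (fst i) (x i)))) (Pi\<^sub>E J A)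
       = (\<integral>\<^sup>+ x. (\<Prod>i\<in>J. ennreal (dens (fst i) (x i))) * indicator (Pi\<^sub>E J A) x \<partial>PiM J (\<lambda>_. \<nu>))"
      by (rule emeasure_density[OF meas])
    also have "\<dots> = (\<integral>\<^sup>+ x. (\<Prod>i\<in>J. ennreal (dens (fst i) (x i)) * indicator (A i) (x i)) \<partial>PiM J (\<lambda>_. \<nu>))"
      by (rule nn_integral_cong) (auto simp: prod.distrib indicator_def space_PiM PiE_iff J)
    also have "\<dots> = (\<Prod>i\<in>J. (\<integral>\<^sup>+ y. ennreal (dens (fst i) y) * indicator (A i) y \<partial>\<nu>))"
      using A measurable_dens by (intro nu.product_nn_integral_prod J) auto
    also have "\<dots> = (\<Prod>i\<in>J. emeasure (obs_law i) (A i))"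
      using A measurable_dens by (intro prod.cong refl) (simp add: obs_law_def emeasure_density)
    finally show "emeasure (density (PiM J (\<lambda>_. \<nu>)) (\<lambda>x. \<Prod>i\<in>J. ennreal (dens (fst i) (x i)))) (Pi\<^sub>E J A)
        = (\<Prod>i\<in>J. emeasure (obs_law i) (A i))" .
  qed
qed

lemma emeasure_restrict_preimage:
  assumes "B \<in> sets (PiM (obs_idx K n) (\<lambda>_. \<nu>))"
  shows "emeasure (PiM (all_idx K) obs_law) ((\<lambda>\<omega>. restrict \<omega> (obs_idx K n)) -` B \<inter> space (Omega \<nu> K))
     = emeasure (PiM (obs_idx K n) obs_law) B"
proof -
  have eq: "(\<lambda>\<omega>. restrict \<omega> (obs_idx K n)) -` B \<inter> space (Omega \<nu> K) =
      prod_emb (all_idx K) obs_law (obs_idx K n) B"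
    by (simp add: prod_emb_def Omega_def space_PiM)
  have "B \<in> sets (PiM (obs_idx K n) obs_law)"
    using assms by (simp cong: sets_PiM_cong)
  then show ?thesis
    unfolding eq by (intro streams.emeasure_PiM_emb' obs_idx_subset finite_obs_idx)
qed

lemma nn_integral_indicator_restrict_mult_component:
  assumes J: "finite J" "J \<subseteq> all_idx K" and i: "i \<in> all_idx K" "i \<notin> J"
    and B: "B \<in> sets (PiM J obs_law)" and z[measurable]: "z \<in> borel_measurable \<nu>"
  shows "(\<integral>\<^sup>+\<omega>. indicator B (restrict \<omega> J) * z (\<omega> i) \<partial>PiM (all_idx K) obs_law)
     = emeasure (PiM J obs_law) B * (\<integral>\<^sup>+x. z x \<partial>obs_law i)"
proof -
  define J' where "J' = insert i J"
  define h where "h x = indicator B (restrict x J) * z (x i)" for x :: "nat \<times> nat \<Rightarrow> 'a"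
  have "(\<lambda>x. restrict x J) \<in> measurable (PiM J' obs_law) (PiM J obs_law)"
    by (rule measurable_restrict_subset) (auto simp: J'_def)
  moreover have "(\<lambda>x. x i) \<in> measurable (PiM J' obs_law) \<nu>"
    using measurable_component_singleton[of i J' obs_law] by (simp add: J'_def)
  ultimately have h: "h \<in> borel_measurable (PiM J' obs_law)"
    unfolding h_def using B by measurable
  have "(\<integral>\<^sup>+\<omega>. indicator B (restrict \<omega> J) * z (\<omega> i) \<partial>PiM (all_idx K) obs_law)
      = (\<integral>\<^sup>+\<omega>. h (restrict \<omega> J') \<partial>PiM (all_idx K) obs_law)"
    using i by (simp add: h_def J'_def restrict_restrict)
  also have "\<dots> = (\<integral>\<^sup>+x. h x \<partial>PiM J' obs_law)"
    using J i h by (intro nn_integral_restrict_PiM) (auto simp: J'_def)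
  also have "\<dots> = (\<integral>\<^sup>+x. (\<integral>\<^sup>+y. h (x(i := y)) \<partial>obs_law i) \<partial>PiM J obs_law)"
    unfolding J'_def by (rule streams.product_nn_integral_insert[OF J(1) i(2) h[unfolded J'_def]])
  also have "\<dots> = (\<integral>\<^sup>+x. indicator B x * (\<integral>\<^sup>+y. z y \<partial>obs_law i) \<partial>PiM J obs_law)"
  proof (rule nn_integral_cong)
    fix x assume "x \<in> space (PiM J obs_law)"
    then have "restrict (x(i := y)) J = x" for y
      using i by (auto simp: space_PiM PiE_def extensional_def restrict_def fun_eq_iff)
    then show "(\<integral>\<^sup>+y. h (x(i := y)) \<partial>obs_law i) = indicator B x * (\<integral>\<^sup>+y. z y \<partial>obs_law i)"
      unfolding h_def by (simp add: nn_integral_cmult)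
  qed
  also have "\<dots> = emeasure (PiM J obs_law) B * (\<integral>\<^sup>+y. z y \<partial>obs_law i)"
    using B by (simp add: nn_integral_multc)
  finally show ?thesis .
qed

lemma nn_integral_past_event_next_obs:
  assumes B: "B \<in> sets (PiM (obs_idx K t) (\<lambda>_. \<nu>))" and k: "k \<in> {1..K}"
    and z: "z \<in> borel_measurable \<nu>"
  defines "A \<equiv> (\<lambda>\<omega>. restrict \<omega> (obs_idx K t)) -` B \<inter> space (Omega \<nu> K)"
  shows "(\<integral>\<^sup>+\<omega>. indicator A \<omega> * z (\<omega> (k, Suc t)) \<partial>PiM (all_idx K) obs_law)
     = emeasure (PiM (all_idx K) obs_law) A * (\<integral>\<^sup>+x. z x \<partial>obs_law (k, Suc t))"
proof -
  have "(\<integral>\<^sup>+\<omega>. indicator A \<omega> * z (\<omega> (k, Suc t)) \<partial>PiM (all_idx K) obs_law)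
      = (\<integral>\<^sup>+\<omega>. indicator B (restrict \<omega> (obs_idx K t)) * z (\<omega> (k, Suc t)) \<partial>PiM (all_idx K) obs_law)"
    by (intro nn_integral_cong) (simp add: A_def indicator_def space_Omega)
  also have "\<dots> = emeasure (PiM (obs_idx K t) obs_law) B * (\<integral>\<^sup>+x. z x \<partial>obs_law (k, Suc t))"
    using B k z obs_idx_subset[of K t]
    by (intro nn_integral_indicator_restrict_mult_component)
      (auto simp: obs_idx_def all_idx_def cong: sets_PiM_cong)
  finally show ?thesis
    unfolding A_def emeasure_restrict_preimage[OF B] .
qed

end

section \<open>Change of measure\<close>

lemma nn_integral_indicator_mult_le: "(\<integral>\<^sup>+x. indicator A x * f x \<partial>M) \<le> (\<integral>\<^sup>+x. f x \<partial>M)"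
  by (intro nn_integral_mono) (simp add: indicator_def)

lemma nn_integral_kl_neg_le_1:
  assumes p: "\<And>x. x \<in> space \<nu> \<Longrightarrow> 0 \<le> p x" and q: "\<And>x. x \<in> space \<nu> \<Longrightarrow> 0 \<le> q x"
    and q_density: "(\<integral>\<^sup>+ x. ennreal (q x) \<partial>\<nu>) = 1"
  shows "(\<integral>\<^sup>+x. kl_neg p q x \<partial>\<nu>) \<le> 1"
proof -
  have "(\<integral>\<^sup>+x. kl_neg p q x \<partial>\<nu>) \<le> (\<integral>\<^sup>+x. ennreal (q x) \<partial>\<nu>)"
  proof (rule nn_integral_mono)
    fix x assume x: "x \<in> space \<nu>"
    show "kl_neg p q x \<le> ennreal (q x)"
    proof (cases "0 < p x \<and> 0 < q x")
      case True
      have "p x * ln (q x / p x) \<le> p x * (q x / p x - 1)"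
        using True by (intro mult_left_mono ln_le_minus_one) auto
      also have "\<dots> \<le> q x"
        using True by (simp add: field_simps)
      finally have "- (p x * ln (p x / q x)) \<le> q x"
        using True by (simp add: ln_div algebra_simps)
      then show ?thesis
        using True by (auto simp: kl_neg_def intro: ennreal_leI)
    next
      case False
      then have "p x = 0 \<or> q x = 0"
        using p[OF x] q[OF x] by auto
      then show ?thesis by (auto simp: kl_neg_def)
    qed
  qed
  then show ?thesis
    using q_density by simp
qed

lemma nn_integral_kl_pos_finite:
  assumes "KL \<nu> p q \<noteq> \<infinity>" "(\<integral>\<^sup>+x. kl_neg p q x \<partial>\<nu>) < \<top>"
  shows "(\<integral>\<^sup>+x. kl_pos p q x \<partial>\<nu>) < \<top>"
  using assms unfolding KL_def
  by (cases "\<integral>\<^sup>+x. kl_pos p q x \<partial>\<nu>" rule: ennreal_cases;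
      cases "\<integral>\<^sup>+x. kl_neg p q x \<partial>\<nu>" rule: ennreal_cases) auto

lemma KL_eq_ereal:
  assumes "(\<integral>\<^sup>+x. kl_pos p q x \<partial>\<nu>) < \<top>" "(\<integral>\<^sup>+x. kl_neg p q x \<partial>\<nu>) < \<top>"
  shows "KL \<nu> p q = ereal (enn2real (\<integral>\<^sup>+x. kl_pos p q x \<partial>\<nu>) - enn2real (\<integral>\<^sup>+x. kl_neg p q x \<partial>\<nu>))"
  using assms unfolding KL_def
  by (cases "\<integral>\<^sup>+x. kl_pos p q x \<partial>\<nu>" rule: ennreal_cases;
      cases "\<integral>\<^sup>+x. kl_neg p q x \<partial>\<nu>" rule: ennreal_cases) auto

text \<open>kl_pos p q is infinite where q vanishes and p does not.\<close>

lemma AE_pos_imp_pos_if_kl_pos_finite: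
  assumes [measurable]: "p \<in> borel_measurable \<nu>" "q \<in> borel_measurable \<nu>"
    and q: "\<And>x. x \<in> space \<nu> \<Longrightarrow> 0 \<le> q x"
    and finite: "(\<integral>\<^sup>+x. kl_pos p q x \<partial>\<nu>) < \<top>"
  shows "AE x in \<nu>. 0 < p x \<longrightarrow> 0 < q x"
proof -
  define S where "S = {x\<in>space \<nu>. 0 < p x \<and> q x \<le> 0}"
  have S: "S \<in> sets \<nu>"
    unfolding S_def by measurable
  have "\<infinity> * emeasure \<nu> S = (\<integral>\<^sup>+x. \<infinity> * indicator S x \<partial>\<nu>)"
    using S by (simp add: nn_integral_cmult_indicator)
  also have "\<dots> \<le> (\<integral>\<^sup>+x. kl_pos p q x \<partial>\<nu>)"
    using q by (intro nn_integral_mono) (fastforce simp: S_def kl_pos_def indicator_def)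
  finally have "emeasure \<nu> S = 0"
    using finite by (metis ennreal_mult_eq_top_iff infinity_ennreal_def not_less top.extremum)
  then show ?thesis
    using S by (intro AE_I'[of S]) (auto simp: S_def)
qed

locale two_iid_streams = P: iid_streams \<nu> K p + Q: iid_streams \<nu> K q for \<nu> K p q +
  assumes abs_cont: "\<And>k. k \<in> {1..K} \<Longrightarrow> AE x in \<nu>. 0 < p k x \<longrightarrow> 0 < q k x"
begin

abbreviation "PP \<equiv> PiM (all_idx K) P.obs_law"
abbreviation "QQ \<equiv> PiM (all_idx K) Q.obs_law"

lemma space_PP: "space PP = space (Omega \<nu> K)"
  and space_QQ: "space QQ = space (Omega \<nu> K)"
  by (simp_all add: Omega_def space_PiM)

lemma sets_PP: "sets PP = sets (Omega \<nu> K)"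
  and sets_QQ: "sets QQ = sets (Omega \<nu> K)"
  unfolding Omega_def by (rule sets_PiM_cong; simp)+

lemma prob_space_PP: "prob_space PP"
  by (rule prob_space_PiM) (rule P.prob_space_obs_law)

lemma prob_space_QQ: "prob_space QQ"
  by (rule prob_space_PiM) (rule Q.prob_space_obs_law)

lemma measurable_p [measurable]: "k \<in> {1..K} \<Longrightarrow> p k \<in> borel_measurable \<nu>"
  and measurable_q [measurable]: "k \<in> {1..K} \<Longrightarrow> q k \<in> borel_measurable \<nu>"
  using P.g_measurable Q.g_measurable by auto

lemma AE_densities_pos:
  "AE \<omega> in PP. \<forall>i\<in>all_idx K. 0 < p (fst i) (\<omega> i) \<and> 0 < q (fst i) (\<omega> i)"
proof (rule AE_ball_countable')
  fix i assume i: "i \<in> all_idx K"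
  then have k: "fst i \<in> {1..K}"
    by (auto simp: all_idx_def)
  have "P.dens (fst i) = p (fst i)"
    using k by (simp add: P.dens_def)
  then have "AE x in \<nu>. 0 < ennreal (P.dens (fst i) x) \<longrightarrow> 0 < p (fst i) x \<and> 0 < q (fst i) x"
    using abs_cont[OF k] by (auto elim: AE_mp)
  then have "AE x in P.obs_law i. 0 < p (fst i) x \<and> 0 < q (fst i) x"
    unfolding P.obs_law_def by (subst AE_density) auto
  then show "AE \<omega> in PP. 0 < p (fst i) (\<omega> i) \<and> 0 < q (fst i) (\<omega> i)"
    by (rule P.streams.AE_component[OF i])
qed (rule countable_subset[OF subset_UNIV], simp)

definition lr :: "nat \<Rightarrow> 'a \<Rightarrow> real" where
  "lr k x = (if 0 < p k x \<and> 0 < q k x then q k x / p k x else 0)"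

lemma lr_nonneg: "0 \<le> lr k x"
  by (simp add: lr_def)

lemma measurable_lr [measurable]: "k \<in> {1..K} \<Longrightarrow> lr k \<in> borel_measurable \<nu>"
  unfolding lr_def by measurable

lemma mult_lr_le: "k \<in> {1..K} \<Longrightarrow> x \<in> space \<nu> \<Longrightarrow> p k x * lr k x \<le> q k x"
  using Q.g_nonneg by (auto simp: lr_def)

lemma measurable_prod_obs:
  assumes "\<And>k. k \<in> {1..K} \<Longrightarrow> h k \<in> borel_measurable \<nu>"
  shows "(\<lambda>x. \<Prod>i\<in>obs_idx K n. ennreal (h (fst i) (x i))) \<in> borel_measurable (PiM (obs_idx K n) (\<lambda>_. \<nu>))"
proof (rule borel_measurable_prod_ennreal)
  fix i assume i: "i \<in> obs_idx K n"
  have "(\<lambda>x. h (fst i) (x i)) \<in> borel_measurable (PiM (obs_idx K n) (\<lambda>_. \<nu>))"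
    using measurable_comp[OF measurable_component_singleton[OF i] assms[OF fst_obs_idx[OF i]]]
    by (simp add: comp_def)
  then show "(\<lambda>x. ennreal (h (fst i) (x i))) \<in> borel_measurable (PiM (obs_idx K n) (\<lambda>_. \<nu>))"
    by measurable
qed

lemma prod_dens_mult_lr_le:
  assumes x: "x \<in> space (PiM (obs_idx K n) (\<lambda>_. \<nu>))"
  shows "(\<Prod>i\<in>obs_idx K n. ennreal (P.dens (fst i) (x i))) * (\<Prod>i\<in>obs_idx K n. ennreal (lr (fst i) (x i)))
      \<le> (\<Prod>i\<in>obs_idx K n. ennreal (Q.dens (fst i) (x i)))"
proof -
  have x_space: "\<And>i. i \<in> obs_idx K n \<Longrightarrow> x i \<in> space \<nu>"
    using x by (auto simp: space_PiM)
  have "(\<Prod>i\<in>obs_idx K n. ennreal (P.dens (fst i) (x i))) * (\<Prod>i\<in>obs_idx K n. ennreal (lr (fst i) (x i)))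
      = ennreal (\<Prod>i\<in>obs_idx K n. P.dens (fst i) (x i) * lr (fst i) (x i))"
    using x_space P.dens_nonneg lr_nonneg
    by (simp add: prod_ennreal prod.distrib ennreal_mult prod_nonneg)
  also have "\<dots> \<le> ennreal (\<Prod>i\<in>obs_idx K n. Q.dens (fst i) (x i))"
  proof (intro ennreal_leI prod_mono)
    fix i assume "i \<in> obs_idx K n"
    then have "fst i \<in> {1..K}" "x i \<in> space \<nu>"
      using x_space fst_obs_idx by auto
    then show "0 \<le> P.dens (fst i) (x i) * lr (fst i) (x i) \<and>
        P.dens (fst i) (x i) * lr (fst i) (x i) \<le> Q.dens (fst i) (x i)"
      using P.g_nonneg mult_lr_le lr_nonneg by (simp add: P.dens_def Q.dens_def)
  qed
  also have "\<dots> = (\<Prod>i\<in>obs_idx K n. ennreal (Q.dens (fst i) (x i)))"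
    using x_space Q.dens_nonneg by (simp add: prod_ennreal)
  finally show ?thesis .
qed

lemma nn_integral_lr_le_emeasure:
  assumes B: "B \<in> sets (PiM (obs_idx K n) (\<lambda>_. \<nu>))"
  defines "A \<equiv> (\<lambda>\<omega>. restrict \<omega> (obs_idx K n)) -` B \<inter> space (Omega \<nu> K)"
  shows "(\<integral>\<^sup>+\<omega>. indicator A \<omega> * ennreal (\<Prod>i\<in>obs_idx K n. lr (fst i) (\<omega> i)) \<partial>PP) \<le> emeasure QQ A"
proof -
  define J where "J = obs_idx K n"
  define h where "h x = indicator B x * (\<Prod>i\<in>J. ennreal (lr (fst i) (x i)))" for x :: "nat \<times> nat \<Rightarrow> 'a"
  have hm: "h \<in> borel_measurable (PiM J (\<lambda>_. \<nu>))"
    unfolding h_def J_def using measurable_prod_obs[of lr n] B by measurable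
  have P_dens: "(\<lambda>x. \<Prod>i\<in>J. ennreal (P.dens (fst i) (x i))) \<in> borel_measurable (PiM J (\<lambda>_. \<nu>))"
    and Q_dens: "(\<lambda>x. \<Prod>i\<in>J. ennreal (Q.dens (fst i) (x i))) \<in> borel_measurable (PiM J (\<lambda>_. \<nu>))"
    unfolding J_def by (rule measurable_prod_obs; simp)+
  have "(\<integral>\<^sup>+\<omega>. indicator A \<omega> * ennreal (\<Prod>i\<in>obs_idx K n. lr (fst i) (\<omega> i)) \<partial>PP)
      = (\<integral>\<^sup>+\<omega>. h (restrict \<omega> J) \<partial>PP)"
    by (intro nn_integral_cong)
      (simp add: h_def A_def J_def space_PP indicator_def prod_ennreal lr_nonneg prod_nonneg)
  also have "\<dots> = (\<integral>\<^sup>+x. h x \<partial>PiM J P.obs_law)"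
    using hm by (intro P.nn_integral_restrict_PiM) (auto simp: J_def obs_idx_subset cong: sets_PiM_cong)
  also have "\<dots> = (\<integral>\<^sup>+x. (\<Prod>i\<in>J. ennreal (P.dens (fst i) (x i))) * h x \<partial>PiM J (\<lambda>_. \<nu>))"
    unfolding P.PiM_obs_law_density[OF finite_obs_idx[of K n, folded J_def]]
    by (rule nn_integral_density[OF P_dens hm])
  also have "\<dots> \<le> (\<integral>\<^sup>+x. (\<Prod>i\<in>J. ennreal (Q.dens (fst i) (x i))) * indicator B x \<partial>PiM J (\<lambda>_. \<nu>))"
    using prod_dens_mult_lr_le by (intro nn_integral_mono) (auto simp: h_def J_def indicator_def)
  also have "\<dots> = emeasure (PiM J Q.obs_law) B"
    unfolding Q.PiM_obs_law_density[OF finite_obs_idx[of K n, folded J_def]]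
    using B by (intro emeasure_density[symmetric] Q_dens) (simp add: J_def)
  also have "\<dots> = emeasure QQ A"
    using Q.emeasure_restrict_preimage[OF B] by (simp add: A_def J_def)
  finally show ?thesis .
qed

definition llr :: "nat \<Rightarrow> 'a \<Rightarrow> real" where
  "llr k x = (if 0 < p k x \<and> 0 < q k x then ln (p k x / q k x) else 0)"

definition llr_pos :: "nat \<Rightarrow> 'a \<Rightarrow> real" where
  "llr_pos k x = max 0 (llr k x)"

definition llr_neg :: "nat \<Rightarrow> 'a \<Rightarrow> real" where
  "llr_neg k x = max 0 (- llr k x)"

lemma llr_pos_nonneg: "0 \<le> llr_pos k x"
  and llr_neg_nonneg: "0 \<le> llr_neg k x"
  by (simp_all add: llr_pos_def llr_neg_def)

lemma measurable_llr [measurable]: "k \<in> {1..K} \<Longrightarrow> llr k \<in> borel_measurable \<nu>"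
  unfolding llr_def by measurable

lemma measurable_llr_pos [measurable]: "k \<in> {1..K} \<Longrightarrow> llr_pos k \<in> borel_measurable \<nu>"
  unfolding llr_pos_def by measurable

lemma measurable_llr_neg [measurable]: "k \<in> {1..K} \<Longrightarrow> llr_neg k \<in> borel_measurable \<nu>"
  unfolding llr_neg_def by measurable

lemma nn_integral_llr_pos_le:
  assumes k: "k \<in> {1..K}"
  shows "(\<integral>\<^sup>+x. ennreal (p k x) * ennreal (llr_pos k x) \<partial>\<nu>) \<le> (\<integral>\<^sup>+x. kl_pos (p k) (q k) x \<partial>\<nu>)"
proof (rule nn_integral_mono)
  fix x assume x: "x \<in> space \<nu>"
  have "0 \<le> p k x" "0 \<le> q k x"
    using P.g_nonneg Q.g_nonneg k x by auto
  then show "ennreal (p k x) * ennreal (llr_pos k x) \<le> kl_pos (p k) (q k) x"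
    by (cases "0 \<le> llr k x")
      (auto simp: llr_pos_def llr_def kl_pos_def ennreal_mult[symmetric] split: if_splits)
qed

lemma nn_integral_llr_neg_eq:
  assumes k: "k \<in> {1..K}"
  shows "(\<integral>\<^sup>+x. ennreal (p k x) * ennreal (llr_neg k x) \<partial>\<nu>) = (\<integral>\<^sup>+x. kl_neg (p k) (q k) x \<partial>\<nu>)"
proof (rule nn_integral_cong)
  fix x assume x: "x \<in> space \<nu>"
  have "0 \<le> p k x" "0 \<le> q k x"
    using P.g_nonneg Q.g_nonneg k x by auto
  then show "ennreal (p k x) * ennreal (llr_neg k x) = kl_neg (p k) (q k) x"
    by (cases "0 \<le> llr k x")
      (auto simp: llr_neg_def llr_def kl_neg_def ennreal_mult[symmetric] ennreal_neg
        mult_nonneg_nonpos split: if_splits)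
qed

lemma nn_integral_kl_neg_finite:
  "k \<in> {1..K} \<Longrightarrow> (\<integral>\<^sup>+x. kl_neg (p k) (q k) x \<partial>\<nu>) < \<top>"
  using nn_integral_kl_neg_le_1[of \<nu> "p k" "q k"] P.g_nonneg Q.g_nonneg Q.g_density
  by (simp add: order.strict_trans1[OF _ ennreal_one_less_top])

lemma prod_lr_eq_exp:
  assumes pos: "\<forall>i\<in>all_idx K. 0 < p (fst i) (\<omega> i) \<and> 0 < q (fst i) (\<omega> i)"
  shows "(\<Prod>i\<in>obs_idx K n. lr (fst i) (\<omega> i)) =
    exp ((\<Sum>t<n. \<Sum>k\<in>{1..K}. llr_neg k (\<omega> (k, Suc t))) - (\<Sum>t<n. \<Sum>k\<in>{1..K}. llr_pos k (\<omega> (k, Suc t))))"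
proof -
  have "(\<Prod>i\<in>obs_idx K n. lr (fst i) (\<omega> i)) = (\<Prod>i\<in>obs_idx K n. exp (- llr (fst i) (\<omega> i)))"
  proof (rule prod.cong[OF refl])
    fix i assume "i \<in> obs_idx K n"
    then have "0 < p (fst i) (\<omega> i)" "0 < q (fst i) (\<omega> i)"
      using pos obs_idx_subset by blast+
    then show "lr (fst i) (\<omega> i) = exp (- llr (fst i) (\<omega> i))"
      by (simp add: lr_def llr_def ln_div exp_diff)
  qed
  also have "\<dots> = exp (\<Sum>k\<in>{1..K}. \<Sum>s\<in>{1..n}. - llr k (\<omega> (k, s)))"
    by (simp add: exp_sum obs_idx_def sum.cartesian_product split_def)
  also have "(\<Sum>k\<in>{1..K}. \<Sum>s\<in>{1..n}. - llr k (\<omega> (k, s))) =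
      (\<Sum>t<n. \<Sum>k\<in>{1..K}. llr_neg k (\<omega> (k, Suc t)) - llr_pos k (\<omega> (k, Suc t)))"
    by (subst sum.swap) (auto simp: sum.atLeast1_atMost_eq llr_neg_def llr_pos_def intro!: sum.cong)
  finally show ?thesis
    by (simp add: sum_subtractf)
qed

end

text \<open>ln w \<le> w - 1 at w = exp (sn - sp) / c, with all terms made nonnegative so that it can be
  integrated in ennreal.\<close>

lemma ln_bound_ennreal:
  fixes sp sn c :: real
  assumes "0 \<le> sp" "0 \<le> sn" "0 < c"
  shows "ennreal sn + ennreal (1 + max 0 (- ln c))
    \<le> ennreal sp + ennreal (exp (sn - sp)) * ennreal (1 / c) + ennreal (max 0 (ln c))"
proof -
  have "ln (exp (sn - sp) / c) \<le> exp (sn - sp) / c - 1"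
    using assms by (intro ln_le_minus_one) auto
  then have "sn + (1 + max 0 (- ln c)) \<le> sp + exp (sn - sp) * (1 / c) + max 0 (ln c)"
    using assms by (auto simp: ln_div max_def)
  then have "ennreal (sn + (1 + max 0 (- ln c))) \<le> ennreal (sp + exp (sn - sp) * (1 / c) + max 0 (ln c))"
    by (rule ennreal_leI)
  moreover have "ennreal (sn + (1 + max 0 (- ln c))) = ennreal sn + ennreal (1 + max 0 (- ln c))"
    using assms by (intro ennreal_plus) auto
  moreover have "ennreal (sp + exp (sn - sp) * (1 / c) + max 0 (ln c)) =
      ennreal (sp + exp (sn - sp) * (1 / c)) + ennreal (max 0 (ln c))"
    using assms by (intro ennreal_plus) auto
  moreover have "ennreal (sp + exp (sn - sp) * (1 / c)) = ennreal sp + ennreal (exp (sn - sp)) * ennreal (1 / c)"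
    using assms by (simp add: ennreal_plus[symmetric] ennreal_mult[symmetric] del: ennreal_plus)
  ultimately show ?thesis
    by simp
qed

section \<open>Wald's identity\<close>

locale stopped_streams = two_iid_streams \<nu> K p q for \<nu> K p q +
  fixes T :: "((nat \<times> nat) \<Rightarrow> 'a) \<Rightarrow> enat" and D :: "((nat \<times> nat) \<Rightarrow> 'a) \<Rightarrow> nat set"
  assumes test: "is_test \<nu> K T D"
    and T_finite: "AE \<omega> in PiM (all_idx K) (iid_streams.obs_law \<nu> K p). T \<omega> \<noteq> \<infinity>"
begin

lemma measurable_obs:
  assumes i: "i \<in> all_idx K" and h: "h \<in> borel_measurable \<nu>"
  shows "(\<lambda>\<omega>. h (\<omega> i)) \<in> borel_measurable PP"
proof -
  have "h \<in> borel_measurable (P.obs_law i)"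
    using h by (simp add: measurable_cong_sets[OF P.sets_obs_law refl])
  then show ?thesis
    using measurable_comp[OF measurable_component_singleton[OF i]] by (simp add: comp_def)
qed

lemma T_gt_preimage:
  obtains B where "B \<in> sets (PiM (obs_idx K t) (\<lambda>_. \<nu>))"
    "{\<omega>\<in>space PP. enat t < T \<omega>} = (\<lambda>\<omega>. restrict \<omega> (obs_idx K t)) -` B \<inter> space (Omega \<nu> K)"
proof -
  obtain B where B: "B \<in> sets (PiM (obs_idx K t) (\<lambda>_. \<nu>))"
    and eq: "{\<omega>\<in>space (Omega \<nu> K). T \<omega> \<le> enat t} = (\<lambda>\<omega>. restrict \<omega> (obs_idx K t)) -` B \<inter> space (Omega \<nu> K)"
    using is_test_le_sets[OF test, of "enat t"] by (auto simp: sets_filt_enat)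
  have "{\<omega>\<in>space PP. enat t < T \<omega>} = space (Omega \<nu> K) - {\<omega>\<in>space (Omega \<nu> K). T \<omega> \<le> enat t}"
    by (auto simp: space_PP)
  also have "\<dots> = (\<lambda>\<omega>. restrict \<omega> (obs_idx K t)) -` (space (PiM (obs_idx K t) (\<lambda>_. \<nu>)) - B) \<inter> space (Omega \<nu> K)"
    unfolding eq using restrict_obs_in_space[of _ \<nu> K t] by auto
  finally show ?thesis
    using B that by blast
qed

lemma T_gt_sets: "{\<omega>\<in>space PP. enat t < T \<omega>} \<in> sets PP"
proof -
  obtain B where "B \<in> sets (PiM (obs_idx K t) (\<lambda>_. \<nu>))"
    and eq: "{\<omega>\<in>space PP. enat t < T \<omega>} = (\<lambda>\<omega>. restrict \<omega> (obs_idx K t)) -` B \<inter> space (Omega \<nu> K)"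
    by (rule T_gt_preimage)
  then have "{\<omega>\<in>space PP. enat t < T \<omega>} \<in> sets (filt \<nu> K (enat t))"
    by (auto simp: sets_filt_enat)
  then show ?thesis
    using sets_filt_subset[of \<nu> K "enat t"] by (auto simp: sets_PP)
qed

lemma nn_integral_T: "(\<integral>\<^sup>+\<omega>. ennreal_of_enat (T \<omega>) \<partial>PP) = (\<Sum>t. emeasure PP {\<omega>\<in>space PP. enat t < T \<omega>})"
proof -
  have "ennreal_of_enat (T \<omega>) = (\<Sum>t. indicator {\<omega>\<in>space PP. enat t < T \<omega>} \<omega>)" if "\<omega> \<in> space PP" for \<omega>
  proof -
    have "(\<lambda>t::nat. if t < T \<omega> then 1 else 0) sums ennreal_of_enat (T \<omega>)"
      using sums_If_finite[of "\<lambda>r. r < T \<omega>" "\<lambda>_. 1 :: ennreal"]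
      by (cases "T \<omega>") (simp_all add: sums_def of_nat_tendsto_top_ennreal)
    also have "(\<lambda>t::nat. if t < T \<omega> then 1 else 0) = (\<lambda>t. indicator {\<omega>\<in>space PP. enat t < T \<omega>} \<omega>)"
      using that by (simp add: one_ennreal_def fun_eq_iff)
    finally show ?thesis
      by (simp add: sums_iff)
  qed
  then have "(\<integral>\<^sup>+\<omega>. ennreal_of_enat (T \<omega>) \<partial>PP) = (\<integral>\<^sup>+\<omega>. (\<Sum>t. indicator {\<omega>\<in>space PP. enat t < T \<omega>} \<omega>) \<partial>PP)"
    by (simp cong: nn_integral_cong)
  also have "\<dots> = (\<Sum>t. emeasure PP {\<omega>\<in>space PP. enat t < T \<omega>})"
    using T_gt_sets by (simp add: nn_integral_suminf)
  finally show ?thesis .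
qed

definition stopped_sum :: "(nat \<Rightarrow> 'a \<Rightarrow> ennreal) \<Rightarrow> ((nat \<times> nat) \<Rightarrow> 'a) \<Rightarrow> ennreal" where
  "stopped_sum z \<omega> = (\<Sum>t. indicator {\<omega>\<in>space PP. enat t < T \<omega>} \<omega> * (\<Sum>k\<in>{1..K}. z k (\<omega> (k, Suc t))))"

lemma measurable_stopped_sum:
  assumes "\<And>k. k \<in> {1..K} \<Longrightarrow> z k \<in> borel_measurable \<nu>"
  shows "stopped_sum z \<in> borel_measurable PP"
proof -
  have "\<And>k t. k \<in> {1..K} \<Longrightarrow> (\<lambda>\<omega>. z k (\<omega> (k, Suc t))) \<in> borel_measurable PP"
    using assms by (intro measurable_obs) (auto simp: all_idx_def)
  then show ?thesis
    unfolding stopped_sum_def using T_gt_sets by measurable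
qed

lemma stopped_sum_eq:
  assumes "\<omega> \<in> space PP" "T \<omega> = enat n"
  shows "stopped_sum z \<omega> = (\<Sum>t<n. \<Sum>k\<in>{1..K}. z k (\<omega> (k, Suc t)))"
proof -
  have "stopped_sum z \<omega> = (\<Sum>t<n. indicator {\<omega>\<in>space PP. enat t < T \<omega>} \<omega> * (\<Sum>k\<in>{1..K}. z k (\<omega> (k, Suc t))))"
    unfolding stopped_sum_def by (rule suminf_finite) (use assms in auto)
  then show ?thesis
    using assms by simp
qed

theorem wald_identity:
  assumes z: "\<And>k. k \<in> {1..K} \<Longrightarrow> z k \<in> borel_measurable \<nu>"
  shows "(\<integral>\<^sup>+\<omega>. stopped_sum z \<omega> \<partial>PP)
      = (\<integral>\<^sup>+\<omega>. ennreal_of_enat (T \<omega>) \<partial>PP) * (\<Sum>k\<in>{1..K}. \<integral>\<^sup>+x. ennreal (p k x) * z k x \<partial>\<nu>)"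
proof -
  have zm: "\<And>k t. k \<in> {1..K} \<Longrightarrow> (\<lambda>\<omega>. z k (\<omega> (k, Suc t))) \<in> borel_measurable PP"
    using z by (intro measurable_obs) (auto simp: all_idx_def)
  have "(\<integral>\<^sup>+\<omega>. stopped_sum z \<omega> \<partial>PP)
      = (\<Sum>t. \<integral>\<^sup>+\<omega>. indicator {\<omega>\<in>space PP. enat t < T \<omega>} \<omega> * (\<Sum>k\<in>{1..K}. z k (\<omega> (k, Suc t))) \<partial>PP)"
    unfolding stopped_sum_def by (rule nn_integral_suminf) (use T_gt_sets zm in measurable)
  also have "\<dots> = (\<Sum>t. \<Sum>k\<in>{1..K}. \<integral>\<^sup>+\<omega>. indicator {\<omega>\<in>space PP. enat t < T \<omega>} \<omega> * z k (\<omega> (k, Suc t)) \<partial>PP)"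
    unfolding sum_distrib_left by (intro suminf_cong nn_integral_sum) (use T_gt_sets zm in measurable)
  also have "\<dots> = (\<Sum>t. \<Sum>k\<in>{1..K}. emeasure PP {\<omega>\<in>space PP. enat t < T \<omega>} * (\<integral>\<^sup>+x. ennreal (p k x) * z k x \<partial>\<nu>))"
  proof (intro suminf_cong sum.cong refl)
    fix t k assume k: "k \<in> {1..K}"
    obtain B where B: "B \<in> sets (PiM (obs_idx K t) (\<lambda>_. \<nu>))"
      and eq: "{\<omega>\<in>space PP. enat t < T \<omega>} = (\<lambda>\<omega>. restrict \<omega> (obs_idx K t)) -` B \<inter> space (Omega \<nu> K)"
      by (rule T_gt_preimage)
    have "(\<integral>\<^sup>+x. z k x \<partial>P.obs_law (k, Suc t)) = (\<integral>\<^sup>+x. ennreal (p k x) * z k x \<partial>\<nu>)"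
      unfolding P.obs_law_def using k z[OF k] by (simp add: nn_integral_density P.dens_def)
    then show "(\<integral>\<^sup>+\<omega>. indicator {\<omega>\<in>space PP. enat t < T \<omega>} \<omega> * z k (\<omega> (k, Suc t)) \<partial>PP)
       = emeasure PP {\<omega>\<in>space PP. enat t < T \<omega>} * (\<integral>\<^sup>+x. ennreal (p k x) * z k x \<partial>\<nu>)"
      unfolding eq P.nn_integral_past_event_next_obs[OF B k z[OF k]] by simp
  qed
  also have "\<dots> = (\<integral>\<^sup>+\<omega>. ennreal_of_enat (T \<omega>) \<partial>PP) * (\<Sum>k\<in>{1..K}. \<integral>\<^sup>+x. ennreal (p k x) * z k x \<partial>\<nu>)"
    by (simp add: nn_integral_T sum_distrib_left[symmetric])
  finally show ?thesis .
qed

end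

section \<open>The stopped log-likelihood ratio\<close>

context stopped_streams
begin

abbreviation "sum_llr_pos \<equiv> stopped_sum (\<lambda>k x. ennreal (llr_pos k x))"
abbreviation "sum_llr_neg \<equiv> stopped_sum (\<lambda>k x. ennreal (llr_neg k x))"

definition stopped_lr :: "((nat \<times> nat) \<Rightarrow> 'a) \<Rightarrow> ennreal" where
  "stopped_lr \<omega> = (\<Sum>n. indicator {\<omega>\<in>space PP. T \<omega> = enat n} \<omega> * ennreal (\<Prod>i\<in>obs_idx K n. lr (fst i) (\<omega> i)))"

lemma decision_T_eq_sets: "{\<omega>\<in>space PP. R (D \<omega>) \<and> T \<omega> = enat n} \<in> sets PP"
  using is_test_decision_eq_sets[OF test, of R n] sets_filt_subset[of \<nu> K "enat n"]
  by (auto simp: sets_PP space_PP)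

lemma T_eq_sets: "{\<omega>\<in>space PP. T \<omega> = enat n} \<in> sets PP"
  using decision_T_eq_sets[of "\<lambda>_. True"] by simp

lemma decision_sets: "{\<omega>\<in>space PP. R (D \<omega>)} \<in> sets PP"
  using is_test_decision_sets[OF test, of R] by (simp add: sets_PP space_PP)

lemma measurable_prod_lr: "(\<lambda>\<omega>. ennreal (\<Prod>i\<in>obs_idx K n. lr (fst i) (\<omega> i))) \<in> borel_measurable PP"
proof -
  have "\<And>i. i \<in> obs_idx K n \<Longrightarrow> (\<lambda>\<omega>. lr (fst i) (\<omega> i)) \<in> borel_measurable PP"
    using measurable_obs[OF _ measurable_lr] obs_idx_subset fst_obs_idx by blast
  then show ?thesis by measurable
qed

lemma measurable_stopped_lr: "stopped_lr \<in> borel_measurable PP"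
  unfolding stopped_lr_def
  using T_eq_sets measurable_prod_lr by measurable

lemma stopped_lr_eq:
  assumes "\<omega> \<in> space PP" "T \<omega> = enat n"
  shows "stopped_lr \<omega> = ennreal (\<Prod>i\<in>obs_idx K n. lr (fst i) (\<omega> i))"
proof -
  have "stopped_lr \<omega> = (\<Sum>m\<in>{n}. indicator {\<omega>\<in>space PP. T \<omega> = enat m} \<omega> * ennreal (\<Prod>i\<in>obs_idx K m. lr (fst i) (\<omega> i)))"
    unfolding stopped_lr_def by (rule suminf_finite) (use assms in auto)
  then show ?thesis
    using assms by simp
qed

lemma nn_integral_stopped_lr_le:
  "(\<integral>\<^sup>+\<omega>. indicator {\<omega>\<in>space PP. R (D \<omega>)} \<omega> * stopped_lr \<omega> \<partial>PP) \<le> emeasure QQ {\<omega>\<in>space PP. R (D \<omega>)}"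
proof -
  define A where "A n = {\<omega>\<in>space PP. R (D \<omega>) \<and> T \<omega> = enat n}" for n
  have A_sets: "\<And>n. A n \<in> sets PP"
    unfolding A_def by (rule decision_T_eq_sets)
  have "(\<integral>\<^sup>+\<omega>. indicator {\<omega>\<in>space PP. R (D \<omega>)} \<omega> * stopped_lr \<omega> \<partial>PP)
     = (\<integral>\<^sup>+\<omega>. (\<Sum>n. indicator (A n) \<omega> * ennreal (\<Prod>i\<in>obs_idx K n. lr (fst i) (\<omega> i))) \<partial>PP)"
    unfolding stopped_lr_def ennreal_suminf_cmult[symmetric]
    by (intro nn_integral_cong suminf_cong) (auto simp: A_def indicator_def)
  also have "\<dots> = (\<Sum>n. \<integral>\<^sup>+\<omega>. indicator (A n) \<omega> * ennreal (\<Prod>i\<in>obs_idx K n. lr (fst i) (\<omega> i)) \<partial>PP)"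
    by (rule nn_integral_suminf) (use A_sets measurable_prod_lr in measurable)
  also have "\<dots> \<le> (\<Sum>n. emeasure QQ (A n))"
  proof (intro suminf_le allI)
    fix n
    obtain B where B: "B \<in> sets (PiM (obs_idx K n) (\<lambda>_. \<nu>))"
      and eq: "A n = (\<lambda>\<omega>. restrict \<omega> (obs_idx K n)) -` B \<inter> space (Omega \<nu> K)"
      using is_test_decision_eq_sets[OF test, of R n] unfolding sets_filt_enat A_def space_PP by blast
    show "(\<integral>\<^sup>+\<omega>. indicator (A n) \<omega> * ennreal (\<Prod>i\<in>obs_idx K n. lr (fst i) (\<omega> i)) \<partial>PP) \<le> emeasure QQ (A n)"
      unfolding eq by (rule nn_integral_lr_le_emeasure[OF B])
  qed auto
  also have "\<dots> = emeasure QQ (\<Union>n. A n)"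
    using A_sets by (intro suminf_emeasure) (auto simp: sets_PP sets_QQ disjoint_family_on_def A_def)
  also have "\<dots> \<le> emeasure QQ {\<omega>\<in>space PP. R (D \<omega>)}"
    using decision_sets by (intro emeasure_mono) (auto simp: A_def sets_PP sets_QQ)
  finally show ?thesis .
qed

lemma stopped_llr_bound_pointwise:
  assumes \<omega>: "\<omega> \<in> space PP" "T \<omega> \<noteq> \<infinity>" "\<forall>i\<in>all_idx K. 0 < p (fst i) (\<omega> i) \<and> 0 < q (fst i) (\<omega> i)"
    and c: "0 < c"
  shows "sum_llr_neg \<omega> + ennreal (1 + max 0 (- ln c))
    \<le> sum_llr_pos \<omega> + stopped_lr \<omega> * ennreal (1 / c) + ennreal (max 0 (ln c))"
proof -
  obtain n where n: "T \<omega> = enat n"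
    using \<omega>(2) by auto
  define sp where "sp = (\<Sum>t<n. \<Sum>k\<in>{1..K}. llr_pos k (\<omega> (k, Suc t)))"
  define sn where "sn = (\<Sum>t<n. \<Sum>k\<in>{1..K}. llr_neg k (\<omega> (k, Suc t)))"
  have "sum_llr_pos \<omega> = ennreal sp" "sum_llr_neg \<omega> = ennreal sn"
    unfolding sp_def sn_def stopped_sum_eq[OF \<omega>(1) n]
    by (simp_all add: sum_ennreal llr_pos_nonneg llr_neg_nonneg sum_nonneg)
  moreover have "stopped_lr \<omega> = ennreal (exp (sn - sp))"
    unfolding stopped_lr_eq[OF \<omega>(1) n] prod_lr_eq_exp[OF \<omega>(3)] sp_def sn_def ..
  moreover have "0 \<le> sp" "0 \<le> sn"
    unfolding sp_def sn_def by (simp_all add: llr_pos_nonneg llr_neg_nonneg sum_nonneg)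
  ultimately show ?thesis
    using ln_bound_ennreal[OF _ _ c] by simp
qed

lemma event_llr_bound_ennreal:
  fixes R :: "nat set \<Rightarrow> bool"
  assumes c: "0 < c"
  defines "A \<equiv> {\<omega>\<in>space PP. R (D \<omega>)}"
  shows "(\<integral>\<^sup>+\<omega>. indicator A \<omega> * sum_llr_neg \<omega> \<partial>PP) + emeasure PP A * ennreal (1 + max 0 (- ln c))
    \<le> (\<integral>\<^sup>+\<omega>. indicator A \<omega> * sum_llr_pos \<omega> \<partial>PP) + emeasure QQ A * ennreal (1 / c)
      + emeasure PP A * ennreal (max 0 (ln c))"
proof -
  have A: "A \<in> sets PP"
    unfolding A_def by (rule decision_sets)
  have meas: "sum_llr_pos \<in> borel_measurable PP" "sum_llr_neg \<in> borel_measurable PP"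
    by (simp_all add: measurable_stopped_sum)
  have "(\<integral>\<^sup>+\<omega>. indicator A \<omega> * sum_llr_neg \<omega> \<partial>PP) + emeasure PP A * ennreal (1 + max 0 (- ln c))
      = (\<integral>\<^sup>+\<omega>. indicator A \<omega> * (sum_llr_neg \<omega> + ennreal (1 + max 0 (- ln c))) \<partial>PP)"
    using A meas by (simp add: distrib_left nn_integral_add nn_integral_multc)
  also have "\<dots> \<le> (\<integral>\<^sup>+\<omega>. indicator A \<omega> * (sum_llr_pos \<omega> + stopped_lr \<omega> * ennreal (1 / c) + ennreal (max 0 (ln c))) \<partial>PP)"
  proof (rule nn_integral_mono_AE)
    show "AE \<omega> in PP. indicator A \<omega> * (sum_llr_neg \<omega> + ennreal (1 + max 0 (- ln c)))
        \<le> indicator A \<omega> * (sum_llr_pos \<omega> + stopped_lr \<omega> * ennreal (1 / c) + ennreal (max 0 (ln c)))"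
      using AE_densities_pos T_finite
    proof eventually_elim
      case (elim \<omega>)
      then show ?case
        using stopped_llr_bound_pointwise[of \<omega> c] c by (cases "\<omega> \<in> A") (auto simp: A_def)
    qed
  qed
  also have "\<dots> = (\<integral>\<^sup>+\<omega>. indicator A \<omega> * sum_llr_pos \<omega> \<partial>PP) + (\<integral>\<^sup>+\<omega>. indicator A \<omega> * stopped_lr \<omega> \<partial>PP) * ennreal (1 / c)
      + emeasure PP A * ennreal (max 0 (ln c))"
    using A meas measurable_stopped_lr
    by (simp add: distrib_left nn_integral_add nn_integral_multc mult.assoc[symmetric])
  also have "\<dots> \<le> (\<integral>\<^sup>+\<omega>. indicator A \<omega> * sum_llr_pos \<omega> \<partial>PP) + emeasure QQ A * ennreal (1 / c)
      + emeasure PP A * ennreal (max 0 (ln c))"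
    using nn_integral_stopped_lr_le[of R] unfolding A_def
    by (intro add_mono mult_right_mono order_refl) auto
  finally show ?thesis .
qed

lemma event_llr_bound:
  fixes R :: "nat set \<Rightarrow> bool"
  assumes c: "0 < c"
    and pos_finite: "(\<integral>\<^sup>+\<omega>. sum_llr_pos \<omega> \<partial>PP) < \<top>" and neg_finite: "(\<integral>\<^sup>+\<omega>. sum_llr_neg \<omega> \<partial>PP) < \<top>"
  defines "A \<equiv> {\<omega>\<in>space PP. R (D \<omega>)}"
  shows "enn2real (\<integral>\<^sup>+\<omega>. indicator A \<omega> * sum_llr_neg \<omega> \<partial>PP) + measure PP A
    \<le> enn2real (\<integral>\<^sup>+\<omega>. indicator A \<omega> * sum_llr_pos \<omega> \<partial>PP) + measure QQ A / c + measure PP A * ln c"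
proof -
  have finite: "(\<integral>\<^sup>+\<omega>. indicator A \<omega> * sum_llr_pos \<omega> \<partial>PP) < \<top>"
    "(\<integral>\<^sup>+\<omega>. indicator A \<omega> * sum_llr_neg \<omega> \<partial>PP) < \<top>"
    using pos_finite neg_finite by (blast intro: le_less_trans nn_integral_indicator_mult_le)+
  have PP_A: "emeasure PP A = ennreal (measure PP A)" and QQ_A: "emeasure QQ A = ennreal (measure QQ A)"
    using prob_space_PP prob_space_QQ by (simp_all add: prob_space_def finite_measure.emeasure_eq_measure)
  define u where "u = max 0 (- ln c)"
  define v where "v = max 0 (ln c)"
  have u: "0 \<le> u" and v: "0 \<le> v" "v = u + ln c"
    by (auto simp: u_def v_def)
  have "enn2real ((\<integral>\<^sup>+\<omega>. indicator A \<omega> * sum_llr_neg \<omega> \<partial>PP) + ennreal (measure PP A) * ennreal (1 + u))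
    \<le> enn2real ((\<integral>\<^sup>+\<omega>. indicator A \<omega> * sum_llr_pos \<omega> \<partial>PP) + ennreal (measure QQ A) * ennreal (1 / c)
      + ennreal (measure PP A) * ennreal v)"
    using event_llr_bound_ennreal[OF c, of R] finite
    unfolding A_def[symmetric] PP_A QQ_A u_def[symmetric] v_def[symmetric]
    by (intro enn2real_mono) (auto simp: ennreal_mult_less_top)
  then have "enn2real (\<integral>\<^sup>+\<omega>. indicator A \<omega> * sum_llr_neg \<omega> \<partial>PP) + measure PP A * (1 + u)
    \<le> enn2real (\<integral>\<^sup>+\<omega>. indicator A \<omega> * sum_llr_pos \<omega> \<partial>PP) + measure QQ A * (1 / c) + measure PP A * v"
    using finite c u v by (simp add: enn2real_plus enn2real_mult ennreal_mult_less_top del: ennreal_plus)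
  then show ?thesis
    unfolding v(2) by (simp add: algebra_simps)
qed

lemma enn2real_nn_integral_decision_split:
  assumes X: "X \<in> borel_measurable PP" and finite: "(\<integral>\<^sup>+\<omega>. X \<omega> \<partial>PP) < \<top>"
  shows "enn2real (\<integral>\<^sup>+\<omega>. indicator {\<omega>\<in>space PP. R (D \<omega>)} \<omega> * X \<omega> \<partial>PP)
       + enn2real (\<integral>\<^sup>+\<omega>. indicator {\<omega>\<in>space PP. \<not> R (D \<omega>)} \<omega> * X \<omega> \<partial>PP) = enn2real (\<integral>\<^sup>+\<omega>. X \<omega> \<partial>PP)"
proof -
  let ?E = "{\<omega>\<in>space PP. R (D \<omega>)}" and ?E' = "{\<omega>\<in>space PP. \<not> R (D \<omega>)}"
  have "(\<integral>\<^sup>+\<omega>. indicator ?E \<omega> * X \<omega> \<partial>PP) + (\<integral>\<^sup>+\<omega>. indicator ?E' \<omega> * X \<omega> \<partial>PP)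
      = (\<integral>\<^sup>+\<omega>. indicator ?E \<omega> * X \<omega> + indicator ?E' \<omega> * X \<omega> \<partial>PP)"
    using decision_sets X by (intro nn_integral_add[symmetric]) auto
  also have "\<dots> = (\<integral>\<^sup>+\<omega>. X \<omega> \<partial>PP)"
    by (rule nn_integral_cong) (auto simp: indicator_def)
  finally have sum: "(\<integral>\<^sup>+\<omega>. indicator ?E \<omega> * X \<omega> \<partial>PP) + (\<integral>\<^sup>+\<omega>. indicator ?E' \<omega> * X \<omega> \<partial>PP) = (\<integral>\<^sup>+\<omega>. X \<omega> \<partial>PP)" .
  have "(\<integral>\<^sup>+\<omega>. indicator ?E \<omega> * X \<omega> \<partial>PP) < \<top>" "(\<integral>\<^sup>+\<omega>. indicator ?E' \<omega> * X \<omega> \<partial>PP) < \<top>"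
    using finite by (blast intro: le_less_trans nn_integral_indicator_mult_le)+
  then show ?thesis
    unfolding sum[symmetric] by (rule enn2real_plus[symmetric])
qed

lemma decision_llr_bound:
  fixes R :: "nat set \<Rightarrow> bool"
  assumes c1: "0 < c1" and c2: "0 < c2"
    and pos_finite: "(\<integral>\<^sup>+\<omega>. sum_llr_pos \<omega> \<partial>PP) < \<top>" and neg_finite: "(\<integral>\<^sup>+\<omega>. sum_llr_neg \<omega> \<partial>PP) < \<top>"
  defines "E \<equiv> {\<omega>\<in>space PP. R (D \<omega>)}" and "E' \<equiv> {\<omega>\<in>space PP. \<not> R (D \<omega>)}"
  shows "1 - (1 - measure QQ E') / c1 - measure QQ E' / c2 - measure PP E * ln c1 - (1 - measure PP E) * ln c2
    \<le> enn2real (\<integral>\<^sup>+\<omega>. sum_llr_pos \<omega> \<partial>PP) - enn2real (\<integral>\<^sup>+\<omega>. sum_llr_neg \<omega> \<partial>PP)"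
proof -
  have "E' = space PP - E" "E = space QQ - E'"
    by (auto simp: E_def E'_def space_PP space_QQ)
  then have PE': "measure PP E' = 1 - measure PP E" and QE: "measure QQ E = 1 - measure QQ E'"
    using prob_space.prob_compl[OF prob_space_PP decision_sets[of R]]
      prob_space.prob_compl[OF prob_space_QQ, of E'] decision_sets[of "\<lambda>S. \<not> R S"]
    by (simp_all add: E_def E'_def sets_PP sets_QQ)
  have "enn2real (\<integral>\<^sup>+\<omega>. indicator E \<omega> * sum_llr_neg \<omega> \<partial>PP) + measure PP E
      \<le> enn2real (\<integral>\<^sup>+\<omega>. indicator E \<omega> * sum_llr_pos \<omega> \<partial>PP) + (1 - measure QQ E') / c1 + measure PP E * ln c1"
    using event_llr_bound[OF c1 pos_finite neg_finite, of R] unfolding E_def[symmetric] QE .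
  moreover have "enn2real (\<integral>\<^sup>+\<omega>. indicator E' \<omega> * sum_llr_neg \<omega> \<partial>PP) + (1 - measure PP E)
      \<le> enn2real (\<integral>\<^sup>+\<omega>. indicator E' \<omega> * sum_llr_pos \<omega> \<partial>PP) + measure QQ E' / c2 + (1 - measure PP E) * ln c2"
    using event_llr_bound[OF c2 pos_finite neg_finite, of "\<lambda>S. \<not> R S"] unfolding E'_def[symmetric] PE' .
  moreover have "sum_llr_pos \<in> borel_measurable PP" "sum_llr_neg \<in> borel_measurable PP"
    by (simp_all add: measurable_stopped_sum)
  note split = this[THEN enn2real_nn_integral_decision_split, of R, folded E_def E'_def]
  ultimately show ?thesis
    using split pos_finite neg_finite by linarith
qed

lemma nn_integral_sum_llr_pos_le:
  assumes kl_pos_finite: "\<And>k. k \<in> {1..K} \<Longrightarrow> (\<integral>\<^sup>+x. kl_pos (p k) (q k) x \<partial>\<nu>) < \<top>"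
    and ET: "(\<integral>\<^sup>+\<omega>. ennreal_of_enat (T \<omega>) \<partial>PP) = ennreal t" and t: "0 \<le> t"
  shows "(\<integral>\<^sup>+\<omega>. sum_llr_pos \<omega> \<partial>PP) \<le> ennreal (t * (\<Sum>k\<in>{1..K}. enn2real (\<integral>\<^sup>+x. kl_pos (p k) (q k) x \<partial>\<nu>)))"
proof -
  have "(\<integral>\<^sup>+\<omega>. sum_llr_pos \<omega> \<partial>PP) = ennreal t * (\<Sum>k\<in>{1..K}. \<integral>\<^sup>+x. ennreal (p k x) * ennreal (llr_pos k x) \<partial>\<nu>)"
    using wald_identity[of "\<lambda>k x. ennreal (llr_pos k x)"] ET by simp
  also have "\<dots> \<le> ennreal t * (\<Sum>k\<in>{1..K}. ennreal (enn2real (\<integral>\<^sup>+x. kl_pos (p k) (q k) x \<partial>\<nu>)))"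
    using nn_integral_llr_pos_le kl_pos_finite by (intro mult_left_mono sum_mono) auto
  also have "\<dots> = ennreal (t * (\<Sum>k\<in>{1..K}. enn2real (\<integral>\<^sup>+x. kl_pos (p k) (q k) x \<partial>\<nu>)))"
    using t by (simp add: ennreal_mult sum_ennreal sum_nonneg)
  finally show ?thesis .
qed

lemma nn_integral_sum_llr_neg_eq:
  assumes ET: "(\<integral>\<^sup>+\<omega>. ennreal_of_enat (T \<omega>) \<partial>PP) = ennreal t" and t: "0 \<le> t"
  shows "(\<integral>\<^sup>+\<omega>. sum_llr_neg \<omega> \<partial>PP) = ennreal (t * (\<Sum>k\<in>{1..K}. enn2real (\<integral>\<^sup>+x. kl_neg (p k) (q k) x \<partial>\<nu>)))"
proof -
  have "\<And>k. k \<in> {1..K} \<Longrightarrow> (\<integral>\<^sup>+x. kl_neg (p k) (q k) x \<partial>\<nu>) < \<top>"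
    by (rule nn_integral_kl_neg_finite)
  then have "(\<integral>\<^sup>+\<omega>. sum_llr_neg \<omega> \<partial>PP) = ennreal t * (\<Sum>k\<in>{1..K}. ennreal (enn2real (\<integral>\<^sup>+x. kl_neg (p k) (q k) x \<partial>\<nu>)))"
    using wald_identity[of "\<lambda>k x. ennreal (llr_neg k x)"] ET nn_integral_llr_neg_eq by simp
  also have "\<dots> = ennreal (t * (\<Sum>k\<in>{1..K}. enn2real (\<integral>\<^sup>+x. kl_neg (p k) (q k) x \<partial>\<nu>)))"
    using t by (simp add: ennreal_mult sum_ennreal sum_nonneg)
  finally show ?thesis .
qed

theorem phi_le_KL_sum:
  fixes R :: "nat set \<Rightarrow> bool"
  assumes kl_pos_finite: "\<And>k. k \<in> {1..K} \<Longrightarrow> (\<integral>\<^sup>+x. kl_pos (p k) (q k) x \<partial>\<nu>) < \<top>"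
    and ET: "(\<integral>\<^sup>+\<omega>. ennreal_of_enat (T \<omega>) \<partial>PP) = ennreal t" and t: "0 \<le> t"
    and a: "0 < a" and b: "0 < b" and ab: "a + b < 1/2"
    and PE: "measure PP {\<omega>\<in>space PP. R (D \<omega>)} \<le> a"
    and QE: "measure QQ {\<omega>\<in>space PP. \<not> R (D \<omega>)} \<le> b"
  obtains r where "(\<Sum>k\<in>{1..K}. KL \<nu> (p k) (q k)) = ereal r" "phi (a + b) b \<le> t * r"
proof
  define IP where "IP k = enn2real (\<integral>\<^sup>+x. kl_pos (p k) (q k) x \<partial>\<nu>)" for k
  define IN where "IN k = enn2real (\<integral>\<^sup>+x. kl_neg (p k) (q k) x \<partial>\<nu>)" for k
  have "KL \<nu> (p k) (q k) = ereal (IP k - IN k)" if "k \<in> {1..K}" for k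
    unfolding IP_def IN_def using KL_eq_ereal[OF kl_pos_finite nn_integral_kl_neg_finite] that by simp
  then have "(\<Sum>k\<in>{1..K}. KL \<nu> (p k) (q k)) = (\<Sum>k\<in>{1..K}. ereal (IP k - IN k))"
    by (rule sum.cong[OF refl])
  then show "(\<Sum>k\<in>{1..K}. KL \<nu> (p k) (q k)) = ereal (\<Sum>k\<in>{1..K}. IP k - IN k)"
    by simp
  have pos: "(\<integral>\<^sup>+\<omega>. sum_llr_pos \<omega> \<partial>PP) \<le> ennreal (t * sum IP {1..K})"
    unfolding IP_def by (rule nn_integral_sum_llr_pos_le[OF kl_pos_finite ET t])
  have neg: "(\<integral>\<^sup>+\<omega>. sum_llr_neg \<omega> \<partial>PP) = ennreal (t * sum IN {1..K})"
    unfolding IN_def by (rule nn_integral_sum_llr_neg_eq[OF ET t])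
  define c1 where "c1 = (1 - b) / (a + b)"
  define c2 where "c2 = b / (1 - (a + b))"
  have "0 < c1" "0 < c2"
    using a b ab by (simp_all add: c1_def c2_def)
  have "phi (a + b) b \<le> 1 - (1 - measure QQ {\<omega>\<in>space PP. \<not> R (D \<omega>)}) / c1
      - measure QQ {\<omega>\<in>space PP. \<not> R (D \<omega>)} / c2
      - measure PP {\<omega>\<in>space PP. R (D \<omega>)} * ln c1 - (1 - measure PP {\<omega>\<in>space PP. R (D \<omega>)}) * ln c2"
    unfolding c1_def c2_def using a b ab PE QE by (intro phi_le_error_bound) auto
  also have "\<dots> \<le> enn2real (\<integral>\<^sup>+\<omega>. sum_llr_pos \<omega> \<partial>PP) - enn2real (\<integral>\<^sup>+\<omega>. sum_llr_neg \<omega> \<partial>PP)"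
    using \<open>0 < c1\<close> \<open>0 < c2\<close> le_less_trans[OF pos ennreal_less_top] neg by (intro decision_llr_bound) simp_all
  also have "\<dots> \<le> t * sum IP {1..K} - t * sum IN {1..K}"
    using enn2real_leI[OF _ pos] neg t by (simp add: IP_def IN_def sum_nonneg)
  finally show "phi (a + b) b \<le> t * (\<Sum>k\<in>{1..K}. IP k - IN k)"
    by (simp add: sum_subtractf right_diff_distrib)
qed

end

section \<open>The lower bound\<close>

lemma mult_max_le_max_mult:
  fixes \<gamma> x y :: real
  shows "\<gamma> * max x y \<le> max (\<gamma> * x) (\<gamma> * y)"
  by (simp add: max_def)

locale multistream_model =
  fixes \<nu> :: "'a measure" and f :: "'p \<Rightarrow> 'a \<Rightarrow> real"
    and \<Theta>0 \<Theta>1 :: "'p set" and K :: nat and \<theta> :: "nat \<Rightarrow> 'p"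
  assumes sigma_finite: "sigma_finite_measure \<nu>"
    and f_meas: "\<And>t. t \<in> \<Theta>0 \<union> \<Theta>1 \<Longrightarrow> f t \<in> borel_measurable \<nu>"
    and f_nonneg: "\<And>t x. t \<in> \<Theta>0 \<union> \<Theta>1 \<Longrightarrow> x \<in> space \<nu> \<Longrightarrow> 0 \<le> f t x"
    and f_density: "\<And>t. t \<in> \<Theta>0 \<union> \<Theta>1 \<Longrightarrow> (\<integral>\<^sup>+ x. ennreal (f t x) \<partial>\<nu>) = 1"
    and K: "K \<ge> 1"
    and \<theta>: "\<theta> \<in> joint_params K \<Theta>0 \<Theta>1"
begin

lemma iid_streams_joint_params:
  assumes "\<theta>' \<in> joint_params K \<Theta>0 \<Theta>1"
  shows "iid_streams \<nu> K (\<lambda>k. f (\<theta>' k))"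
  unfolding iid_streams_def
proof (intro conjI allI impI)
  have \<theta>': "\<And>k. k \<in> {1..K} \<Longrightarrow> \<theta>' k \<in> \<Theta>0 \<union> \<Theta>1"
    using assms by (auto simp: joint_params_def)
  show "sigma_finite_measure \<nu>"
    by (rule sigma_finite)
  show "1 \<le> K"
    using K by simp
  show "\<And>k. k \<in> {1..K} \<Longrightarrow> f (\<theta>' k) \<in> borel_measurable \<nu>"
    using f_meas \<theta>' by blast
  show "\<And>k x. k \<in> {1..K} \<Longrightarrow> x \<in> space \<nu> \<Longrightarrow> 0 \<le> f (\<theta>' k) x"
    using f_nonneg \<theta>' by blast
  show "\<And>k. k \<in> {1..K} \<Longrightarrow> (\<integral>\<^sup>+ x. ennreal (f (\<theta>' k) x) \<partial>\<nu>) = 1"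
    using f_density \<theta>' by blast
qed

lemma Pth_eq_PiM_obs_law:
  "\<theta>' \<in> joint_params K \<Theta>0 \<Theta>1 \<Longrightarrow> Pth \<nu> f K \<theta>' = PiM (all_idx K) (iid_streams.obs_law \<nu> K (\<lambda>k. f (\<theta>' k)))"
  unfolding Pth_def using iid_streams.PiM_density_eq_PiM_obs_law[OF iid_streams_joint_params] by simp

lemma prob_space_Pth: "\<theta>' \<in> joint_params K \<Theta>0 \<Theta>1 \<Longrightarrow> prob_space (Pth \<nu> f K \<theta>')"
  unfolding Pth_eq_PiM_obs_law
  by (rule prob_space_PiM) (rule iid_streams.prob_space_obs_law[OF iid_streams_joint_params])

lemma sets_Pth: "sets (Pth \<nu> f K \<theta>') = sets (Omega \<nu> K)"
  unfolding Pth_def Omega_def by (rule sets_PiM_cong) auto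

lemma space_Pth: "space (Pth \<nu> f K \<theta>') = space (Omega \<nu> K)"
  unfolding Pth_def Omega_def by (simp add: space_PiM)

lemma Delta_error_bounds:
  assumes TD: "(T, D) \<in> Delta \<nu> f K \<Theta>0 \<Theta>1 \<alpha> \<beta>"
    and \<theta>1: "\<theta>1 \<in> joint_params K \<Theta>0 \<Theta>1" and \<theta>2: "\<theta>2 \<in> joint_params K \<Theta>0 \<Theta>1"
    and k: "k \<in> signals K \<Theta>1 \<theta>2 - signals K \<Theta>1 \<theta>1"
  shows "measure (Pth \<nu> f K \<theta>1) {\<omega>\<in>space (Omega \<nu> K). k \<in> D \<omega>} \<le> \<alpha>"
    and "measure (Pth \<nu> f K \<theta>2) {\<omega>\<in>space (Omega \<nu> K). k \<notin> D \<omega>} \<le> \<beta>"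
proof -
  have test: "is_test \<nu> K T D"
    using TD by (simp add: Delta_def)
  have "measure (Pth \<nu> f K \<theta>1) {\<omega>\<in>space (Omega \<nu> K). k \<in> D \<omega>}
      \<le> measure (Pth \<nu> f K \<theta>1) {\<omega>\<in>space (Omega \<nu> K). D \<omega> - signals K \<Theta>1 \<theta>1 \<noteq> {}}"
    using k is_test_decision_sets[OF test, of "\<lambda>S. S - signals K \<Theta>1 \<theta>1 \<noteq> {}"]
    by (intro finite_measure.finite_measure_mono prob_space.finite_measure prob_space_Pth[OF \<theta>1])
      (auto simp: sets_Pth)
  also have "\<dots> \<le> \<alpha>"
    using TD \<theta>1 by (simp add: Delta_def space_Pth)
  finally show "measure (Pth \<nu> f K \<theta>1) {\<omega>\<in>space (Omega \<nu> K). k \<in> D \<omega>} \<le> \<alpha>" .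
  have "measure (Pth \<nu> f K \<theta>2) {\<omega>\<in>space (Omega \<nu> K). k \<notin> D \<omega>}
      \<le> measure (Pth \<nu> f K \<theta>2) {\<omega>\<in>space (Omega \<nu> K). signals K \<Theta>1 \<theta>2 - D \<omega> \<noteq> {}}"
    using k is_test_decision_sets[OF test, of "\<lambda>S. signals K \<Theta>1 \<theta>2 - S \<noteq> {}"]
    by (intro finite_measure.finite_measure_mono prob_space.finite_measure prob_space_Pth[OF \<theta>2])
      (auto simp: sets_Pth)
  also have "\<dots> \<le> \<beta>"
    using TD \<theta>2 by (simp add: Delta_def space_Pth)
  finally show "measure (Pth \<nu> f K \<theta>2) {\<omega>\<in>space (Omega \<nu> K). k \<notin> D \<omega>} \<le> \<beta>" .
qed

lemma nn_integral_kl_pos_finite_if_KL_joint_finite: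
  assumes \<theta>': "\<theta>' \<in> joint_params K \<Theta>0 \<Theta>1" and finite: "KL_joint \<nu> f K \<theta> \<theta>' \<noteq> \<infinity>"
    and k: "k \<in> {1..K}"
  shows "(\<integral>\<^sup>+x. kl_pos (f (\<theta> k)) (f (\<theta>' k)) x \<partial>\<nu>) < \<top>"
proof (rule nn_integral_kl_pos_finite)
  show "KL \<nu> (f (\<theta> k)) (f (\<theta>' k)) \<noteq> \<infinity>"
    using finite k by (auto simp: KL_joint_def sum_Pinfty)
  have "\<theta> k \<in> \<Theta>0 \<union> \<Theta>1" "\<theta>' k \<in> \<Theta>0 \<union> \<Theta>1"
    using \<theta> \<theta>' k by (auto simp: joint_params_def)
  then show "(\<integral>\<^sup>+x. kl_neg (f (\<theta> k)) (f (\<theta>' k)) x \<partial>\<nu>) < \<top>"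
    using nn_integral_kl_neg_le_1[of \<nu> "f (\<theta> k)" "f (\<theta>' k)"] f_nonneg f_density
    by (simp add: order.strict_trans1[OF _ ennreal_one_less_top])
qed

lemma Delta_AE_T_finite:
  assumes "(T, D) \<in> Delta \<nu> f K \<Theta>0 \<Theta>1 \<alpha> \<beta>" and \<theta>': "\<theta>' \<in> joint_params K \<Theta>0 \<Theta>1"
  shows "AE \<omega> in Pth \<nu> f K \<theta>'. T \<omega> \<noteq> \<infinity>"
proof -
  have "prob_space.prob (Pth \<nu> f K \<theta>') {\<omega>\<in>space (Pth \<nu> f K \<theta>'). T \<omega> < \<infinity>} = 1"
    using assms by (simp add: Delta_def)
  then have "AE \<omega> in Pth \<nu> f K \<theta>'. \<omega> \<in> {\<omega>\<in>space (Pth \<nu> f K \<theta>'). T \<omega> < \<infinity>}"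
    by (rule prob_space.AE_prob_1[OF prob_space_Pth[OF \<theta>']])
  then show ?thesis
    by eventually_elim auto
qed

lemma KL_joint_lower_bound:
  fixes R :: "nat set \<Rightarrow> bool" and a b t :: real
  assumes \<theta>': "\<theta>' \<in> joint_params K \<Theta>0 \<Theta>1"
    and TD: "(T, D) \<in> Delta \<nu> f K \<Theta>0 \<Theta>1 \<alpha> \<beta>"
    and ET: "(\<integral>\<^sup>+\<omega>. ennreal_of_enat (T \<omega>) \<partial>Pth \<nu> f K \<theta>) = ennreal t" and t: "0 \<le> t"
    and a: "0 < a" and b: "0 < b" and ab: "a + b < 1/2"
    and PE: "measure (Pth \<nu> f K \<theta>) {\<omega>\<in>space (Omega \<nu> K). R (D \<omega>)} \<le> a"
    and QE: "measure (Pth \<nu> f K \<theta>') {\<omega>\<in>space (Omega \<nu> K). \<not> R (D \<omega>)} \<le> b"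
  shows "KL_joint \<nu> f K \<theta> \<theta>' = \<infinity> \<or> (\<exists>r. KL_joint \<nu> f K \<theta> \<theta>' = ereal r \<and> phi (a + b) b \<le> t * r)"
proof (cases "KL_joint \<nu> f K \<theta> \<theta>' = \<infinity>")
  case False
  define p where "p = (\<lambda>k. f (\<theta> k))"
  define q where "q = (\<lambda>k. f (\<theta>' k))"
  interpret P: iid_streams \<nu> K p
    unfolding p_def by (rule iid_streams_joint_params[OF \<theta>])
  interpret Q: iid_streams \<nu> K q
    unfolding q_def by (rule iid_streams_joint_params[OF \<theta>'])
  have kl_pos_finite: "\<And>k. k \<in> {1..K} \<Longrightarrow> (\<integral>\<^sup>+x. kl_pos (p k) (q k) x \<partial>\<nu>) < \<top>"
    unfolding p_def q_def by (rule nn_integral_kl_pos_finite_if_KL_joint_finite[OF \<theta>' False])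
  have abs_cont: "\<And>k. k \<in> {1..K} \<Longrightarrow> AE x in \<nu>. 0 < p k x \<longrightarrow> 0 < q k x"
    using P.g_measurable Q.g_measurable Q.g_nonneg kl_pos_finite
    by (blast intro: AE_pos_imp_pos_if_kl_pos_finite)
  have test: "is_test \<nu> K T D"
    using TD by (simp add: Delta_def)
  have PP: "Pth \<nu> f K \<theta> = PiM (all_idx K) P.obs_law" and QQ: "Pth \<nu> f K \<theta>' = PiM (all_idx K) Q.obs_law"
    unfolding p_def q_def by (simp_all add: Pth_eq_PiM_obs_law \<theta> \<theta>')
  have T_finite: "AE \<omega> in PiM (all_idx K) P.obs_law. T \<omega> \<noteq> \<infinity>"
    using Delta_AE_T_finite[OF TD \<theta>] unfolding PP .
  interpret stopped_streams \<nu> K p q T D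
    by (intro stopped_streams.intro two_iid_streams.intro two_iid_streams_axioms.intro
        stopped_streams_axioms.intro P.iid_streams_axioms Q.iid_streams_axioms abs_cont test T_finite)
  obtain r where "(\<Sum>k\<in>{1..K}. KL \<nu> (p k) (q k)) = ereal r" "phi (a + b) b \<le> t * r"
  proof (rule phi_le_KL_sum[OF kl_pos_finite _ t a b ab, of R])
    show "(\<integral>\<^sup>+\<omega>. ennreal_of_enat (T \<omega>) \<partial>PP) = ennreal t"
      using ET unfolding PP .
    show "measure PP {\<omega>\<in>space PP. R (D \<omega>)} \<le> a"
      using PE unfolding PP space_PP .
    show "measure QQ {\<omega>\<in>space PP. \<not> R (D \<omega>)} \<le> b"
      using QE unfolding QQ space_PP .
  qed
  then show ?thesis
    by (auto simp: KL_joint_def p_def q_def)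
qed simp

lemma div_inf_I0_le:
  assumes TD: "(T, D) \<in> Delta \<nu> f K \<Theta>0 \<Theta>1 \<alpha> \<beta>"
    and ET: "(\<integral>\<^sup>+\<omega>. ennreal_of_enat (T \<omega>) \<partial>Pth \<nu> f K \<theta>) = ennreal t" and t: "0 \<le> t"
    and a: "0 < \<alpha>" and b: "0 < \<beta>" and ab: "\<alpha> + \<beta> < 1/2" and c: "c \<le> phi (\<alpha> + \<beta>) \<beta>"
  shows "div_inf c (I0 \<nu> f K \<Theta>0 \<Theta>1 \<theta>) \<le> t"
  unfolding I0_def
proof (rule div_inf_Inf_le[OF _ phi_pos c t])
  fix s assume "s \<in> {KL_joint \<nu> f K \<theta> \<theta>' |\<theta>'. \<theta>' \<in> joint_params K \<Theta>0 \<Theta>1 \<and> signals K \<Theta>1 \<theta>' - signals K \<Theta>1 \<theta> \<noteq> {}}"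
  then obtain \<theta>' k where \<theta>': "\<theta>' \<in> joint_params K \<Theta>0 \<Theta>1"
    and k: "k \<in> signals K \<Theta>1 \<theta>' - signals K \<Theta>1 \<theta>" and s: "s = KL_joint \<nu> f K \<theta> \<theta>'"
    by blast
  show "s = \<infinity> \<or> (\<exists>r. s = ereal r \<and> phi (\<alpha> + \<beta>) \<beta> \<le> t * r)"
    unfolding s using Delta_error_bounds[OF TD \<theta> \<theta>' k]
    by (intro KL_joint_lower_bound[OF \<theta>' TD ET t a b ab, where R="\<lambda>S. k \<in> S"]) auto
qed (use a b ab in auto)

lemma div_inf_I1_le:
  assumes TD: "(T, D) \<in> Delta \<nu> f K \<Theta>0 \<Theta>1 \<alpha> \<beta>"
    and ET: "(\<integral>\<^sup>+\<omega>. ennreal_of_enat (T \<omega>) \<partial>Pth \<nu> f K \<theta>) = ennreal t" and t: "0 \<le> t"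
    and a: "0 < \<alpha>" and b: "0 < \<beta>" and ab: "\<alpha> + \<beta> < 1/2" and c: "c \<le> phi (\<alpha> + \<beta>) \<alpha>"
  shows "div_inf c (I1 \<nu> f K \<Theta>0 \<Theta>1 \<theta>) \<le> t"
  unfolding I1_def
proof (rule div_inf_Inf_le[OF _ phi_pos c t])
  fix s assume "s \<in> {KL_joint \<nu> f K \<theta> \<theta>' |\<theta>'. \<theta>' \<in> joint_params K \<Theta>0 \<Theta>1 \<and> signals K \<Theta>1 \<theta> - signals K \<Theta>1 \<theta>' \<noteq> {}}"
  then obtain \<theta>' k where \<theta>': "\<theta>' \<in> joint_params K \<Theta>0 \<Theta>1"
    and k: "k \<in> signals K \<Theta>1 \<theta> - signals K \<Theta>1 \<theta>'" and s: "s = KL_joint \<nu> f K \<theta> \<theta>'"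
    by blast
  have "s = \<infinity> \<or> (\<exists>r. s = ereal r \<and> phi (\<beta> + \<alpha>) \<alpha> \<le> t * r)"
    unfolding s using Delta_error_bounds[OF TD \<theta>' \<theta> k] ab
    by (intro KL_joint_lower_bound[OF \<theta>' TD ET t b a, where R="\<lambda>S. k \<notin> S"]) auto
  then show "s = \<infinity> \<or> (\<exists>r. s = ereal r \<and> phi (\<alpha> + \<beta>) \<alpha> \<le> t * r)"
    by (simp add: add.commute)
qed (use a b ab in auto)

lemma nn_integral_T_ge_div_inf:
  assumes TD: "(T, D) \<in> Delta \<nu> f K \<Theta>0 \<Theta>1 \<alpha> \<beta>"
    and a: "0 < \<alpha>" and b: "0 < \<beta>" and ab: "\<alpha> + \<beta> < 1/2"
    and c0: "c0 \<le> phi (\<alpha> + \<beta>) \<beta>" and c1: "c1 \<le> phi (\<alpha> + \<beta>) \<alpha>"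
  shows "ennreal (max (div_inf c0 (I0 \<nu> f K \<Theta>0 \<Theta>1 \<theta>)) (div_inf c1 (I1 \<nu> f K \<Theta>0 \<Theta>1 \<theta>)))
     \<le> (\<integral>\<^sup>+\<omega>. ennreal_of_enat (T \<omega>) \<partial>Pth \<nu> f K \<theta>)"
proof (cases "\<integral>\<^sup>+\<omega>. ennreal_of_enat (T \<omega>) \<partial>Pth \<nu> f K \<theta>" rule: ennreal_cases)
  case (real t)
  then show ?thesis
    using div_inf_I0_le[OF TD real(2,1) a b ab c0] div_inf_I1_le[OF TD real(2,1) a b ab c1]
    by (simp add: ennreal_leI)
qed simp

lemma Lopt_ge_div_inf:
  assumes "0 < \<alpha>" "0 < \<beta>" "\<alpha> + \<beta> < 1/2"
    and "c0 \<le> phi (\<alpha> + \<beta>) \<beta>" "c1 \<le> phi (\<alpha> + \<beta>) \<alpha>"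
  shows "ennreal (max (div_inf c0 (I0 \<nu> f K \<Theta>0 \<Theta>1 \<theta>)) (div_inf c1 (I1 \<nu> f K \<Theta>0 \<Theta>1 \<theta>)))
     \<le> Lopt \<nu> f K \<Theta>0 \<Theta>1 \<theta> \<alpha> \<beta>"
  unfolding Lopt_def using nn_integral_T_ge_div_inf[OF _ assms] by (auto intro!: INF_greatest)

lemma Lopt_lower_bound:
  assumes "0 < \<alpha>" "0 < \<beta>" "\<alpha> + \<beta> < 1/2"
  shows "ennreal (max (div_inf (phi (\<alpha> + \<beta>) \<beta>) (I0 \<nu> f K \<Theta>0 \<Theta>1 \<theta>))
      (div_inf (phi (\<alpha> + \<beta>) \<alpha>) (I1 \<nu> f K \<Theta>0 \<Theta>1 \<theta>))) \<le> Lopt \<nu> f K \<Theta>0 \<Theta>1 \<theta> \<alpha> \<beta>"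
  using assms by (intro Lopt_ge_div_inf) auto

lemma Lopt_asymptotic_lower_bound:
  assumes "0 < \<epsilon>"
  shows "\<exists>\<delta>>0. \<forall>\<alpha> \<beta>. 0 < \<alpha> \<and> \<alpha> < \<delta> \<and> 0 < \<beta> \<and> \<beta> < \<delta> \<longrightarrow>
    ennreal ((1 - \<epsilon>) * max (div_inf \<bar>ln \<beta>\<bar> (I0 \<nu> f K \<Theta>0 \<Theta>1 \<theta>)) (div_inf \<bar>ln \<alpha>\<bar> (I1 \<nu> f K \<Theta>0 \<Theta>1 \<theta>)))
      \<le> Lopt \<nu> f K \<Theta>0 \<Theta>1 \<theta> \<alpha> \<beta>"
proof -
  obtain \<delta> where \<delta>: "0 < \<delta>" "\<delta> \<le> 1/4"
    and phi_ge: "\<And>x y. 0 < x \<Longrightarrow> x < 2 * \<delta> \<Longrightarrow> 0 < y \<Longrightarrow> y < \<delta> \<Longrightarrow> (1 - \<epsilon>) * \<bar>ln y\<bar> \<le> phi x y"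
    using phi_asymptotic[OF assms] by blast
  have "ennreal ((1 - \<epsilon>) * max (div_inf \<bar>ln \<beta>\<bar> (I0 \<nu> f K \<Theta>0 \<Theta>1 \<theta>)) (div_inf \<bar>ln \<alpha>\<bar> (I1 \<nu> f K \<Theta>0 \<Theta>1 \<theta>)))
      \<le> Lopt \<nu> f K \<Theta>0 \<Theta>1 \<theta> \<alpha> \<beta>" if "0 < \<alpha>" "\<alpha> < \<delta>" "0 < \<beta>" "\<beta> < \<delta>" for \<alpha> \<beta>
  proof -
    have "ennreal ((1 - \<epsilon>) * max (div_inf \<bar>ln \<beta>\<bar> (I0 \<nu> f K \<Theta>0 \<Theta>1 \<theta>)) (div_inf \<bar>ln \<alpha>\<bar> (I1 \<nu> f K \<Theta>0 \<Theta>1 \<theta>)))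
        \<le> ennreal (max (div_inf ((1 - \<epsilon>) * \<bar>ln \<beta>\<bar>) (I0 \<nu> f K \<Theta>0 \<Theta>1 \<theta>))
                       (div_inf ((1 - \<epsilon>) * \<bar>ln \<alpha>\<bar>) (I1 \<nu> f K \<Theta>0 \<Theta>1 \<theta>)))"
      unfolding mult_div_inf[symmetric] by (intro ennreal_leI mult_max_le_max_mult)
    also have "\<dots> \<le> Lopt \<nu> f K \<Theta>0 \<Theta>1 \<theta> \<alpha> \<beta>"
      using that \<delta> by (intro Lopt_ge_div_inf phi_ge) auto
    finally show ?thesis .
  qed
  then show ?thesis
    using \<delta>(1) by blast
qed

end

theorem theorem1:
  fixes \<nu> :: "'a measure" and f :: "'p \<Rightarrow> 'a \<Rightarrow> real"
    and \<Theta>0 \<Theta>1 :: "'p set" and K :: nat and \<theta> :: "nat \<Rightarrow> 'p"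
  assumes sigma_finite: "sigma_finite_measure \<nu>"
    and f_meas: "\<And>t. t \<in> \<Theta>0 \<union> \<Theta>1 \<Longrightarrow> f t \<in> borel_measurable \<nu>"
    and f_nonneg: "\<And>t x. t \<in> \<Theta>0 \<union> \<Theta>1 \<Longrightarrow> x \<in> space \<nu> \<Longrightarrow> 0 \<le> f t x"
    and f_density: "\<And>t. t \<in> \<Theta>0 \<union> \<Theta>1 \<Longrightarrow> (\<integral>\<^sup>+ x. ennreal (f t x) \<partial>\<nu>) = 1"
    and ne0: "\<Theta>0 \<noteq> {}" and ne1: "\<Theta>1 \<noteq> {}" and disj: "\<Theta>0 \<inter> \<Theta>1 = {}"
    and sep0: "\<And>t. t \<in> \<Theta>0 \<Longrightarrow> KL_set \<nu> f t \<Theta>1 > 0"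
    and sep1: "\<And>t. t \<in> \<Theta>1 \<Longrightarrow> KL_set \<nu> f t \<Theta>0 > 0"
    and K: "K \<ge> 1"
    and \<theta>: "\<theta> \<in> joint_params K \<Theta>0 \<Theta>1"
  shows "(\<forall>\<alpha> \<beta>. 0 < \<alpha> \<and> \<alpha> < 1 \<and> 0 < \<beta> \<and> \<beta> < 1 \<and> \<alpha> + \<beta> < 1/2 \<longrightarrow>
            ennreal (max (div_inf (phi (\<alpha> + \<beta>) \<beta>) (I0 \<nu> f K \<Theta>0 \<Theta>1 \<theta>))
                         (div_inf (phi (\<alpha> + \<beta>) \<alpha>) (I1 \<nu> f K \<Theta>0 \<Theta>1 \<theta>)))
              \<le> Lopt \<nu> f K \<Theta>0 \<Theta>1 \<theta> \<alpha> \<beta>)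
       \<and> (\<forall>\<epsilon>>0. \<exists>\<delta>>0. \<forall>\<alpha> \<beta>. 0 < \<alpha> \<and> \<alpha> < \<delta> \<and> 0 < \<beta> \<and> \<beta> < \<delta> \<longrightarrow>
            ennreal ((1 - \<epsilon>) * max (div_inf \<bar>ln \<beta>\<bar> (I0 \<nu> f K \<Theta>0 \<Theta>1 \<theta>))
                                    (div_inf \<bar>ln \<alpha>\<bar> (I1 \<nu> f K \<Theta>0 \<Theta>1 \<theta>)))
              \<le> Lopt \<nu> f K \<Theta>0 \<Theta>1 \<theta> \<alpha> \<beta>)"
proof -
  interpret multistream_model \<nu> f \<Theta>0 \<Theta>1 K \<theta>
    by (rule multistream_model.intro[OF sigma_finite f_meas f_nonneg f_density K \<theta>])
  show ?thesis
    using Lopt_lower_bound Lopt_asymptotic_lower_bound by blast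
qed

end
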